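(* Let $J\in\mathbb T$. If $f\in\mathcal S_T^1(\Omega_D,A)$, then $(\overline\partial_Tf)_J=\overline\partial_Jf_J$ and $(\partial_Tf)_J=\partial_Jf_J$. If moreover $f\in\mathcal S_T^2(\Omega_D,A)$, then $(\Delta_Tf)_J=\Delta_Jf_J$. Here $g_J$ denotes the restriction of $g$ to $(\Omega_D)_J=\Omega_D\cap\mathbb R_J$.
   Context: $A$ is a finite-dimensional associative real algebra with unit and a $*$-involution $x\mapsto x^c$; $\mathbb S_A=\{x:x+x^c=0,xx^c=1\}\ne\emptyset$. $V\subseteq A$ has basis $(v_0=1,v_1,\dots,v_N)$, $N\ge1$, $v_s\in\mathbb S_A$ pairwise anticommuting for $s\ge1$, $V\subseteq\bigcup_{J\in\mathbb S_A}(\mathbb R+J\mathbb R)$, and $A$ carries the Euclidean norm making a completion of this basis orthonormal. $\mathbb R_{\ell,m}=\mathrm{Span}_{\mathbb R}(v_\ell,\dots,v_m)$, $\mathbb S_{\ell,m}$ its unit sphere. $T=(t_0,\dots,t_\tau)$, $0\le t_0<\dots<t_\tau=N$, torus $\mathbb T=\mathbb S_{t_0+1,t_1}\times\cdots\times\mathbb S_{t_{\tau-1}+1,t_\tau}$ (for $\tau=0$, single index $J=\emptyset$). For $J\in\mathbb T$, $\beta\in\mathbb R^\tau$: $\beta J=\sum\beta_hJ_h$; $J_\emptyset=1$, $J_K=J_{k_1}\cdots J_{k_p}$ for $K=\{k_1<\dots<k_p\}$; $\overline\beta^h$ flips the sign of $\beta_h$; $\sigma(h,K)$ is the parity of $\#\{k\in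 K:k\le h\}$. $D\subseteq\mathbb R_{0,t_0}\times\mathbb R^\tau$ open, invariant under $(\alpha,\beta)\mapsto(\alpha,\overline\beta^h)$; $\Omega_D=\{\alpha+\beta J\}$ open. $T$-stem functions $F=\sum_KE_KF_K:D\to A\otimes\mathbb R^{2^\tau}$ satisfy $F_K(\alpha,\overline\beta^h)=F_K(\alpha,\beta)$ if $h\notin K$, $-F_K(\alpha,\beta)$ if $h\in K$, and induce $\mathcal I(F)(\alpha+\beta J)=\sum_KJ_KF_K(\alpha,\beta)$ ($\mathcal I$ injective); $\mathcal S^p_T(\Omega_D,A)$ is the image of stems with $C^p$ components. Slice operators: $\mathbb R_J=\mathrm{Span}(v_0,\dots,v_{t_0},J_1,\dots,J_\tau)$; on $C^1$ functions on open subsets of $\mathbb R_J$, $\partial_s$ ($s\le t_0$) and $\partial_{t_0+u}$ ($1\le u\le\tau$) are directional derivatives along $v_s$ and $J_u$; $\overline\partial_J=\sum_{s=0}^{t_0}v_s\partial_s+\sum_uJ_u\partial_{t_0+u}$, $\partial_J=\partial_0-\sum_{s=1}^{t_0}v_s\partial_s-\sum_uJ_u\partial_{t_0+u}$, $\Delta_J=\sum_{s=0}^{t_0+\tau}\partial_s^2$. Global operators: with $\alpha=\sum_{s=0}^{t_0}x_sv_s$, $\partial_{\alpha_s},\partial_{\beta_h}$ partial derivatives on $D$; $\overline\partial_\alpha=\partial_{\alpha_0}+\sum_{s\ge1}v_s\partial_{\alpha_s}$, $\partial_\alpha=\partial_{\alpha_0}-\sum_{s\ge1}v_s\partial_{\alpha_s}$,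 $\overline\partial^u_\alpha=\partial_{\alpha_0}-(-1)^u\sum_{s=1}^{t_0}v_s\partial_{\alpha_s}$; $(\overline\partial_TF)_K=\overline\partial^{|K|+1}_\alpha F_K+\sum_h(-1)^{\sigma(h,K)+1}\partial_{\beta_h}F_{K\triangle\{h\}}$, $(\partial_TF)_K=\overline\partial^{|K|}_\alpha F_K+\sum_h(-1)^{\sigma(h,K)}\partial_{\beta_h}F_{K\triangle\{h\}}$, $(\Delta_TF)_K=\partial_\alpha\overline\partial_\alpha F_K+\sum_h\partial^2_{\beta_h}F_K$; on $T$-functions, $\overline\partial_T\mathcal I(F)=\mathcal I(\overline\partial_TF)$, $\partial_T\mathcal I(F)=\mathcal I(\partial_TF)$, $\Delta_T\mathcal I(F)=\mathcal I(\Delta_TF)$. *)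

theory Defs
  imports "HOL-Analysis.Analysis"
begin

text \<open>Points of the stem domain D are pairs (alpha, beta) with alpha in R_{0,t_0} (a subset of A)
 and beta :: nat => real, where only beta 1, ..., beta tau are meaningful
 (the others are required to vanish on D).\<close>

definition star_involution :: "('a::real_algebra_1 \<Rightarrow> 'a) \<Rightarrow> bool" where
  "star_involution cj \<longleftrightarrow> linear cj \<and> (\<forall>x y. cj (x * y) = cj y * cj x) \<and> (\<forall>x. cj (cj x) = x)"

definition SA :: "('a::real_algebra_1 \<Rightarrow> 'a) \<Rightarrow> 'a set" where
  "SA cj = {x. x + cj x = 0 \<and> x * cj x = 1}"

definition sphere_span :: "(nat \<Rightarrow> 'a::real_normed_vector) \<Rightarrow> nat \<Rightarrow> nat \<Rightarrow> 'a set" where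
  "sphere_span v l m = {x \<in> span (v ` {l..m}). norm x = 1}"

text \<open>The torus; J h is meaningful for h in {1..tau}.\<close>
definition torus :: "(nat \<Rightarrow> 'a::real_normed_vector) \<Rightarrow> (nat \<Rightarrow> nat) \<Rightarrow> nat \<Rightarrow> (nat \<Rightarrow> 'a) set" where
  "torus v t \<tau> = {J. \<forall>h\<in>{1..\<tau>}. J h \<in> sphere_span v (Suc (t (h - 1))) (t h)}"

definition JK :: "(nat \<Rightarrow> 'a::monoid_mult) \<Rightarrow> nat set \<Rightarrow> 'a" where
  "JK J K = prod_list (map J (sorted_list_of_set K))"

definition tpoint :: "(nat \<Rightarrow> 'a::real_vector) \<Rightarrow> nat \<Rightarrow> 'a \<times> (nat \<Rightarrow> real) \<Rightarrow> 'a" where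
  "tpoint J \<tau> p = fst p + (\<Sum>h\<in>{1..\<tau>}. snd p h *\<^sub>R J h)"

definition OmegaD :: "(nat \<Rightarrow> 'a::real_normed_vector) \<Rightarrow> (nat \<Rightarrow> nat) \<Rightarrow> nat \<Rightarrow> ('a \<times> (nat \<Rightarrow> real)) set \<Rightarrow> 'a set" where
  "OmegaD v t \<tau> D = {tpoint J \<tau> p | p J. p \<in> D \<and> J \<in> torus v t \<tau>}"

definition RJ :: "(nat \<Rightarrow> 'a::real_vector) \<Rightarrow> nat \<Rightarrow> nat \<Rightarrow> (nat \<Rightarrow> 'a) \<Rightarrow> 'a set" where
  "RJ v t0 \<tau> J = span (v ` {0..t0} \<union> J ` {1..\<tau>})"

definition induced :: "(nat \<Rightarrow> 'a::{real_normed_vector,real_algebra_1}) \<Rightarrow> (nat \<Rightarrow> nat) \<Rightarrow> nat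
    \<Rightarrow> ('a \<times> (nat \<Rightarrow> real)) set \<Rightarrow> (nat set \<Rightarrow> 'a \<times> (nat \<Rightarrow> real) \<Rightarrow> 'a) \<Rightarrow> 'a \<Rightarrow> 'a" where
  "induced v t \<tau> D F x = (SOME y. \<exists>p\<in>D. \<exists>J\<in>torus v t \<tau>.
       x = tpoint J \<tau> p \<and> y = (\<Sum>K\<in>Pow {1..\<tau>}. JK J K * F K p))"

definition T_domain :: "(nat \<Rightarrow> 'a::real_normed_vector) \<Rightarrow> nat \<Rightarrow> nat \<Rightarrow> ('a \<times> (nat \<Rightarrow> real)) set \<Rightarrow> bool" where
  "T_domain v t0 \<tau> D \<longleftrightarrow>
     openin (top_of_set (span (v ` {0..t0}) \<times> {\<beta>. \<forall>h. h \<notin> {1..\<tau>} \<longrightarrow> \<beta> h = 0})) D \<and>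
     (\<forall>p\<in>D. \<forall>h\<in>{1..\<tau>}. (fst p, (snd p)(h := - snd p h)) \<in> D)"

definition T_stem :: "nat \<Rightarrow> ('a \<times> (nat \<Rightarrow> real)) set \<Rightarrow> (nat set \<Rightarrow> 'a \<times> (nat \<Rightarrow> real) \<Rightarrow> 'a::real_vector) \<Rightarrow> bool" where
  "T_stem \<tau> D F \<longleftrightarrow> (\<forall>K. K \<subseteq> {1..\<tau>} \<longrightarrow> (\<forall>p\<in>D. \<forall>h\<in>{1..\<tau>}.
      F K (fst p, (snd p)(h := - snd p h)) = (if h \<in> K then - F K p else F K p)))"

definition pd_alpha :: "'a::real_normed_vector \<Rightarrow> ('a \<times> (nat \<Rightarrow> real) \<Rightarrow> 'b::real_normed_vector) \<Rightarrow> 'a \<times> (nat \<Rightarrow> real) \<Rightarrow> 'b" where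
  "pd_alpha w G p = vector_derivative (\<lambda>r. G (fst p + r *\<^sub>R w, snd p)) (at 0)"

definition pd_beta :: "nat \<Rightarrow> ('a \<times> (nat \<Rightarrow> real) \<Rightarrow> 'b::real_normed_vector) \<Rightarrow> 'a \<times> (nat \<Rightarrow> real) \<Rightarrow> 'b" where
  "pd_beta h G p = vector_derivative (\<lambda>r. G (fst p, (snd p)(h := snd p h + r))) (at 0)"

definition C1_on :: "(nat \<Rightarrow> 'a::real_normed_vector) \<Rightarrow> nat \<Rightarrow> nat \<Rightarrow> ('a \<times> (nat \<Rightarrow> real)) set
    \<Rightarrow> ('a \<times> (nat \<Rightarrow> real) \<Rightarrow> 'b::real_normed_vector) \<Rightarrow> bool" where
  "C1_on v t0 \<tau> D G \<longleftrightarrow> continuous_on D G \<and>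
     (\<forall>s\<le>t0. (\<forall>p\<in>D. (\<lambda>r. G (fst p + r *\<^sub>R v s, snd p)) differentiable (at 0)) \<and>
              continuous_on D (pd_alpha (v s) G)) \<and>
     (\<forall>h\<in>{1..\<tau>}. (\<forall>p\<in>D. (\<lambda>r. G (fst p, (snd p)(h := snd p h + r))) differentiable (at 0)) \<and>
              continuous_on D (pd_beta h G))"

definition C2_on :: "(nat \<Rightarrow> 'a::real_normed_vector) \<Rightarrow> nat \<Rightarrow> nat \<Rightarrow> ('a \<times> (nat \<Rightarrow> real)) set
    \<Rightarrow> ('a \<times> (nat \<Rightarrow> real) \<Rightarrow> 'b::real_normed_vector) \<Rightarrow> bool" where
  "C2_on v t0 \<tau> D G \<longleftrightarrow> C1_on v t0 \<tau> D G \<and>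
     (\<forall>s\<le>t0. C1_on v t0 \<tau> D (pd_alpha (v s) G)) \<and>
     (\<forall>h\<in>{1..\<tau>}. C1_on v t0 \<tau> D (pd_beta h G))"

text \<open>Global operators.  dbar_alpha u = d_{alpha_0} - (-1)^u sum_{s=1}^{t_0} v_s d_{alpha_s};
  dbar_alpha 1 is the operator dbar_alpha and dbar_alpha 0 is d_alpha.\<close>
definition dbar_alpha :: "(nat \<Rightarrow> 'a::{real_normed_vector,real_algebra_1}) \<Rightarrow> nat \<Rightarrow> nat
    \<Rightarrow> ('a \<times> (nat \<Rightarrow> real) \<Rightarrow> 'a) \<Rightarrow> 'a \<times> (nat \<Rightarrow> real) \<Rightarrow> 'a" where
  "dbar_alpha v t0 u G p = pd_alpha (v 0) G p - ((-1::real) ^ u) *\<^sub>R (\<Sum>s\<in>{1..t0}. v s * pd_alpha (v s) G p)"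

definition sigma_par :: "nat \<Rightarrow> nat set \<Rightarrow> nat" where
  "sigma_par h K = card {k\<in>K. k \<le> h}"

definition symd :: "nat set \<Rightarrow> nat \<Rightarrow> nat set" where
  "symd K h = (if h \<in> K then K - {h} else insert h K)"

definition dbarT :: "(nat \<Rightarrow> 'a::{real_normed_vector,real_algebra_1}) \<Rightarrow> nat \<Rightarrow> nat
    \<Rightarrow> (nat set \<Rightarrow> 'a \<times> (nat \<Rightarrow> real) \<Rightarrow> 'a) \<Rightarrow> nat set \<Rightarrow> 'a \<times> (nat \<Rightarrow> real) \<Rightarrow> 'a" where
  "dbarT v t0 \<tau> F K p = dbar_alpha v t0 (card K + 1) (F K) p +
     (\<Sum>h\<in>{1..\<tau>}. ((-1::real) ^ (sigma_par h K + 1)) *\<^sub>R pd_beta h (F (symd K h)) p)"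

definition dT :: "(nat \<Rightarrow> 'a::{real_normed_vector,real_algebra_1}) \<Rightarrow> nat \<Rightarrow> nat
    \<Rightarrow> (nat set \<Rightarrow> 'a \<times> (nat \<Rightarrow> real) \<Rightarrow> 'a) \<Rightarrow> nat set \<Rightarrow> 'a \<times> (nat \<Rightarrow> real) \<Rightarrow> 'a" where
  "dT v t0 \<tau> F K p = dbar_alpha v t0 (card K) (F K) p +
     (\<Sum>h\<in>{1..\<tau>}. ((-1::real) ^ sigma_par h K) *\<^sub>R pd_beta h (F (symd K h)) p)"

definition LapT :: "(nat \<Rightarrow> 'a::{real_normed_vector,real_algebra_1}) \<Rightarrow> nat \<Rightarrow> nat
    \<Rightarrow> (nat set \<Rightarrow> 'a \<times> (nat \<Rightarrow> real) \<Rightarrow> 'a) \<Rightarrow> nat set \<Rightarrow> 'a \<times> (nat \<Rightarrow> real) \<Rightarrow> 'a" where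
  "LapT v t0 \<tau> F K p = dbar_alpha v t0 0 (dbar_alpha v t0 1 (F K)) p +
     (\<Sum>h\<in>{1..\<tau>}. pd_beta h (pd_beta h (F K)) p)"

definition sd :: "'a::real_normed_vector \<Rightarrow> ('a \<Rightarrow> 'b::real_normed_vector) \<Rightarrow> 'a \<Rightarrow> 'b" where
  "sd w f y = vector_derivative (\<lambda>r. f (y + r *\<^sub>R w)) (at 0)"

definition wJ :: "(nat \<Rightarrow> 'a) \<Rightarrow> nat \<Rightarrow> (nat \<Rightarrow> 'a) \<Rightarrow> nat \<Rightarrow> 'a" where
  "wJ v t0 J i = (if i \<le> t0 then v i else J (i - t0))"

definition dbarJ :: "(nat \<Rightarrow> 'a::{real_normed_vector,real_algebra_1}) \<Rightarrow> nat \<Rightarrow> nat \<Rightarrow> (nat \<Rightarrow> 'a) \<Rightarrow> ('a \<Rightarrow> 'a) \<Rightarrow> 'a \<Rightarrow> 'a" where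
  "dbarJ v t0 \<tau> J f y = (\<Sum>s\<in>{0..t0}. v s * sd (v s) f y) + (\<Sum>u\<in>{1..\<tau>}. J u * sd (J u) f y)"

definition dJ :: "(nat \<Rightarrow> 'a::{real_normed_vector,real_algebra_1}) \<Rightarrow> nat \<Rightarrow> nat \<Rightarrow> (nat \<Rightarrow> 'a) \<Rightarrow> ('a \<Rightarrow> 'a) \<Rightarrow> 'a \<Rightarrow> 'a" where
  "dJ v t0 \<tau> J f y = sd (v 0) f y - (\<Sum>s\<in>{1..t0}. v s * sd (v s) f y) - (\<Sum>u\<in>{1..\<tau>}. J u * sd (J u) f y)"

definition LapJ :: "(nat \<Rightarrow> 'a::{real_normed_vector,real_algebra_1}) \<Rightarrow> nat \<Rightarrow> nat \<Rightarrow> (nat \<Rightarrow> 'a) \<Rightarrow> ('a \<Rightarrow> 'a) \<Rightarrow> 'a \<Rightarrow> 'a" where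
  "LapJ v t0 \<tau> J f y = (\<Sum>i\<in>{0..t0 + \<tau>}. sd (wJ v t0 J i) (sd (wJ v t0 J i) f) y)"

end

theory Submission
  imports Defs
begin

text \<open>On the slice \<open>\<real>\<^sub>J\<close> a point is \<open>\<alpha> + \<beta>J\<close>, and moving along \<open>v\<^sub>s\<close> (\<open>s \<le> t\<^sub>0\<close>) or along
  \<open>J\<^sub>u\<close> moves \<open>(\<alpha>, \<beta>)\<close> along a coordinate line of \<open>D\<close>.  Hence the directional derivatives of
  \<open>f\<^sub>J = \<Sum>\<^sub>K J\<^sub>K F\<^sub>K\<close> are \<open>\<Sum>\<^sub>K J\<^sub>K \<partial>F\<^sub>K\<close> (that the induced function is well defined comes from
  the parity of the stem components).  The slice operators multiply these derivatives from the
  left by \<open>v\<^sub>s\<close> or \<open>J\<^sub>u\<close>.  By the Clifford relations \<open>v\<^sub>s\<close> (\<open>1 \<le> s \<le> t\<^sub>0\<close>) anticommutes with every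
  \<open>J\<^sub>h\<close>, so \<open>v\<^sub>s J\<^sub>K = (-1)\<^bsup>|K|\<^esup> J\<^sub>K v\<^sub>s\<close>, while \<open>J\<^sub>u J\<^sub>K = \<plusminus>J\<^bsub>K \<triangle> {u}\<^esub>\<close>; after reindexing
  \<open>K \<mapsto> K \<triangle> {u}\<close> this gives exactly the components of \<open>dbarT F\<close> and \<open>dT F\<close>.  The
  \<open>\<alpha>\<close>-part of \<open>LapT F\<close> reduces to \<open>\<Sum>\<^sub>s \<partial>\<^sub>s\<^sup>2\<close> by the Clifford relations and the symmetry of
  second derivatives.\<close>

section \<open>Ordered products of imaginary units\<close>

lemma JK_singleton [simp]: "JK J {u} = J u"
  by (simp add: JK_def)

lemma JK_Un:
  assumes "finite A" "finite B" "\<forall>a\<in>A. \<forall>b\<in>B. a < b"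
  shows "JK J (A \<union> B) = JK J A * JK J B"
proof -
  have "A \<inter> B = {}"
    using assms(3) by auto
  then have "sorted_list_of_set (A \<union> B) = sorted_list_of_set A @ sorted_list_of_set B"
    using assms by (subst sorted_list_of_set_unique[symmetric])
      (auto simp: sorted_wrt_append card_Un_disjoint)
  then show ?thesis
    by (simp add: JK_def)
qed

lemma JK_scaleR:
  fixes J J' :: "nat \<Rightarrow> 'a::real_algebra_1"
  assumes "finite K" "\<forall>h\<in>K. J' h = c h *\<^sub>R J h"
  shows "JK J' K = prod c K *\<^sub>R JK J K"
proof -
  have "prod_list (map J' xs) = prod_list (map c xs) *\<^sub>R prod_list (map J xs)"
    if "set xs \<subseteq> K" for xs
    using that assms(2) by (induction xs) auto
  from this[of "sorted_list_of_set K"] show ?thesis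
    using assms(1) prod.distinct_set_conv_list[of "sorted_list_of_set K" c]
    by (simp add: JK_def)
qed

lemma anticommute_JK:
  fixes x :: "'a::ring_1"
  assumes "finite K" "\<forall>h\<in>K. x * J h = - (J h * x)"
  shows "x * JK J K = (-1) ^ card K * (JK J K * x)"
proof -
  have "x * prod_list (map J xs) = (-1) ^ length xs * (prod_list (map J xs) * x)"
    if "set xs \<subseteq> K" for xs
    using that
  proof (induction xs)
    case (Cons a xs)
    have "x * prod_list (map J (a # xs)) = - (J a * (x * prod_list (map J xs)))"
      using Cons.prems assms(2) by (simp flip: mult.assoc)
    then show ?case
      using Cons by (cases "even (length xs)") (auto simp: mult.assoc)
  qed simp
  from this[of "sorted_list_of_set K"] show ?thesis
    using assms(1) by (simp add: JK_def)
qed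

lemma symd_symd [simp]: "symd (symd K h) h = K"
  by (auto simp: symd_def)

lemma symd_subset: "K \<subseteq> A \<Longrightarrow> h \<in> A \<Longrightarrow> symd K h \<subseteq> A"
  by (auto simp: symd_def)

lemma sum_Pow_symd:
  assumes "u \<in> A"
  shows "(\<Sum>K\<in>Pow A. g (symd K u)) = (\<Sum>K\<in>Pow A. g K)"
  by (rule sum.reindex_bij_witness[of _ "\<lambda>K. symd K u" "\<lambda>K. symd K u"])
    (use assms symd_subset in auto)

lemma sum_atLeast0_atMost_add:
  "(\<Sum>i\<in>{0..a + b}. g i) = (\<Sum>i\<in>{0..a}. g i) + (\<Sum>h\<in>{1..b}. g (a + h))"
  for g :: "nat \<Rightarrow> 'b::comm_monoid_add"
  by (induction b) (simp_all add: add.assoc)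

text \<open>Modulo 2, the exponent counts the factors of \<open>J\<^sub>K\<close> that \<open>J\<^sub>u\<close> passes, plus one
  when \<open>u \<in> K\<close>, where \<open>J\<^sub>u J\<^sub>u = -1\<close> is used.\<close>
lemma mult_JK_symd:
  fixes J :: "nat \<Rightarrow> 'a::real_algebra_1"
  assumes K: "finite K" and square: "J u * J u = -1"
    and anti: "\<forall>k\<in>K. k \<noteq> u \<longrightarrow> J u * J k = - (J k * J u)"
  shows "J u * JK J K = (-1) ^ (sigma_par u (symd K u) + 1) *\<^sub>R JK J (symd K u)"
proof -
  define L where "L = {k\<in>K. k < u}"
  define R where "R = {k\<in>K. u < k}"
  have fin: "finite L" "finite R"
    using K by (auto simp: L_def R_def)
  have JK_LR: "JK J (L \<union> R) = JK J L * JK J R"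
    by (rule JK_Un) (use fin in \<open>auto simp: L_def R_def\<close>)
  have "JK J ({u} \<union> R) = JK J {u} * JK J R"
    by (rule JK_Un) (use fin in \<open>auto simp: R_def\<close>)
  moreover have "JK J (L \<union> ({u} \<union> R)) = JK J L * JK J ({u} \<union> R)"
    by (rule JK_Un) (use fin in \<open>auto simp: L_def R_def\<close>)
  ultimately have JK_LuR: "JK J (L \<union> ({u} \<union> R)) = JK J L * (J u * JK J R)"
    by simp
  have swap: "J u * JK J L = (-1) ^ card L * (JK J L * J u)"
    using fin anti by (intro anticommute_JK) (auto simp: L_def)
  have "{k \<in> symd K u. k \<le> u} = (if u \<in> K then L else insert u L)"
    by (auto simp: symd_def L_def)
  then have sigma: "sigma_par u (symd K u) = (if u \<in> K then card L else card L + 1)"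
    using fin by (simp add: sigma_par_def L_def)
  show ?thesis
  proof (cases "u \<in> K")
    case True
    then have K_split: "K = L \<union> ({u} \<union> R)" and symd_K: "symd K u = L \<union> R"
      by (auto simp: L_def R_def symd_def)
    have "J u * JK J K = (J u * JK J L) * (J u * JK J R)"
      by (simp only: K_split JK_LuR mult.assoc)
    also have "\<dots> = (-1) ^ card L * (JK J L * (J u * J u) * JK J R)"
      by (simp only: swap mult.assoc)
    also have "\<dots> = (-1) ^ (card L + 1) * JK J (symd K u)"
      by (simp add: square symd_K JK_LR)
    finally show ?thesis
      using True by (simp add: sigma scaleR_conv_of_real)
  next
    case False
    then have K_split: "K = L \<union> R" and symd_K: "symd K u = L \<union> ({u} \<union> R)"
      by (auto simp: L_def R_def symd_def not_less le_less)
    have "J u * JK J K = (J u * JK J L) * JK J R"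
      by (simp only: K_split JK_LR mult.assoc)
    also have "\<dots> = (-1) ^ card L * JK J (symd K u)"
      by (simp only: swap symd_K JK_LuR mult.assoc)
    finally show ?thesis
      using False by (simp add: sigma scaleR_conv_of_real)
  qed
qed

section \<open>Orthonormal Clifford families\<close>

definition orthonormal_on :: "nat set \<Rightarrow> (nat \<Rightarrow> 'a::real_inner) \<Rightarrow> bool" where
  "orthonormal_on S e \<longleftrightarrow> (\<forall>r\<in>S. \<forall>s\<in>S. inner (e r) (e s) = (if r = s then 1 else 0))"

definition clifford_on :: "nat set \<Rightarrow> (nat \<Rightarrow> 'a::ring_1) \<Rightarrow> bool" where
  "clifford_on S e \<longleftrightarrow>
     (\<forall>s\<in>S. e s * e s = -1) \<and> (\<forall>r\<in>S. \<forall>s\<in>S. r \<noteq> s \<longrightarrow> e r * e s = - (e s * e r))"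

lemma orthonormal_onD:
  "orthonormal_on S e \<Longrightarrow> r \<in> S \<Longrightarrow> s \<in> S \<Longrightarrow> inner (e r) (e s) = (if r = s then 1 else 0)"
  by (simp add: orthonormal_on_def)

lemma orthonormal_on_subset: "orthonormal_on S e \<Longrightarrow> B \<subseteq> S \<Longrightarrow> orthonormal_on B e"
  unfolding orthonormal_on_def by blast

lemma clifford_on_subset: "clifford_on S e \<Longrightarrow> B \<subseteq> S \<Longrightarrow> clifford_on B e"
  unfolding clifford_on_def by blast

lemma clifford_on_square: "clifford_on S e \<Longrightarrow> s \<in> S \<Longrightarrow> e s * e s = -1"
  by (simp add: clifford_on_def)

lemma clifford_on_anticommute:
  "clifford_on S e \<Longrightarrow> r \<in> S \<Longrightarrow> s \<in> S \<Longrightarrow> r \<noteq> s \<Longrightarrow> e r * e s = - (e s * e r)"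
  unfolding clifford_on_def by blast

lemma inner_span_disjoint:
  assumes e: "orthonormal_on S e" and "B \<subseteq> S" "B' \<subseteq> S" "B \<inter> B' = {}"
    and x: "x \<in> span (e ` B)" and y: "y \<in> span (e ` B')"
  shows "inner x y = 0"
proof -
  have basis: "orthogonal (e r) (e s)" if "r \<in> B" "s \<in> B'" for r s
  proof -
    have "r \<noteq> s"
      using that assms(4) by auto
    then show ?thesis
      using that assms(2,3) by (auto simp: orthogonal_def orthonormal_onD[OF e] subset_iff)
  qed
  have orth_y: "orthogonal (e r) y" if "r \<in> B" for r
    by (rule orthogonal_to_span[OF y]) (use basis that in auto)
  have "orthogonal y x"
    by (rule orthogonal_to_span[OF x]) (use orth_y in \<open>auto simp: orthogonal_commute\<close>)
  then show ?thesis
    by (simp add: orthogonal_def inner_commute)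
qed

lemma span_orthonormal_expansion:
  assumes e: "orthonormal_on S e" and B: "B \<subseteq> S" "finite B" and x: "x \<in> span (e ` B)"
  shows "x = (\<Sum>s\<in>B. inner x (e s) *\<^sub>R e s)"
  using x
proof (induction rule: span_induct_alt)
  case (step c y z)
  then obtain r where r: "r \<in> B" "y = e r"
    by blast
  have "(\<Sum>s\<in>B. inner (e r) (e s) *\<^sub>R e s) = (\<Sum>s\<in>B. if s = r then e s else 0)"
    using r B by (intro sum.cong) (auto simp: orthonormal_onD[OF e] subset_iff)
  also have "\<dots> = e r"
    using r B by simp
  finally have y_expansion: "(\<Sum>s\<in>B. inner y (e s) *\<^sub>R e s) = y"
    using r by simp
  have "(\<Sum>s\<in>B. inner (c *\<^sub>R y + z) (e s) *\<^sub>R e s)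
      = c *\<^sub>R (\<Sum>s\<in>B. inner y (e s) *\<^sub>R e s) + (\<Sum>s\<in>B. inner z (e s) *\<^sub>R e s)"
    by (simp add: inner_add_left scaleR_add_left sum.distrib scaleR_sum_right)
  then show ?case
    by (simp only: y_expansion flip: step.IH)
qed simp

lemma clifford_span:
  fixes e :: "nat \<Rightarrow> 'a::{real_algebra_1, real_inner}"
  assumes cl: "clifford_on S e" and on: "orthonormal_on S e"
    and x: "x \<in> span (e ` S)" and y: "y \<in> span (e ` S)"
  shows "x * y + y * x = (- 2 * inner x y) *\<^sub>R 1"
proof -
  have linear_left: "(c *\<^sub>R z + w) * b + b * (c *\<^sub>R z + w) = c *\<^sub>R (z * b + b * z) + (w * b + b * w)"
    for b z w :: 'a and c
    by (simp add: algebra_simps)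
  have linear_right: "b * (c *\<^sub>R z + w) + (c *\<^sub>R z + w) * b = c *\<^sub>R (b * z + z * b) + (b * w + w * b)"
    for b z w :: 'a and c
    by (simp add: algebra_simps)
  have scalar: "c *\<^sub>R (- 2 * a) *\<^sub>R (1::'a) + (- 2 * b) *\<^sub>R 1 = (- 2 * (c * a + b)) *\<^sub>R 1" for a b c
    by (simp add: algebra_simps)
  have basis: "e r * y + y * e r = (- 2 * inner (e r) y) *\<^sub>R 1" if r: "r \<in> S" for r
    using y
  proof (induction rule: span_induct_alt)
    case (step c z w)
    then obtain s where s: "s \<in> S" "z = e s"
      by blast
    have "e r * z + z * e r = (- 2 * inner (e r) z) *\<^sub>R 1"
    proof (cases "r = s")
      case True
      then show ?thesis
        using r s by (simp add: clifford_on_square[OF cl] orthonormal_onD[OF on] scaleR_conv_of_real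
            flip: minus_add_distrib)
    next
      case False
      then show ?thesis
        using r s by (simp add: clifford_on_anticommute[OF cl r s(1) False] orthonormal_onD[OF on])
    qed
    then show ?case
      by (simp only: linear_right step.IH scalar inner_add_right inner_scaleR_right)
  qed simp
  show ?thesis
    using x
  proof (induction rule: span_induct_alt)
    case (step c z w)
    then obtain r where "r \<in> S" "z = e r"
      by blast
    then show ?case
      by (simp only: linear_left basis step.IH scalar inner_add_left inner_scaleR_left)
  qed simp
qed

lemma clifford_span_square:
  fixes e :: "nat \<Rightarrow> 'a::{real_algebra_1, real_inner}"
  assumes "clifford_on S e" "orthonormal_on S e" "x \<in> span (e ` S)" "norm x = 1"
  shows "x * x = -1"
proof -
  have "2 *\<^sub>R (x * x) = 2 *\<^sub>R (-1 :: 'a)"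
    using clifford_span[OF assms(1-3) assms(3)] assms(4)
    by (simp add: scaleR_2 flip: power2_norm_eq_inner)
  then show ?thesis
    by (rule scaleR_left_imp_eq[rotated]) simp
qed

lemma clifford_span_anticommute:
  fixes e :: "nat \<Rightarrow> 'a::{real_algebra_1, real_inner}"
  assumes "clifford_on S e" "orthonormal_on S e" "x \<in> span (e ` S)" "y \<in> span (e ` S)"
    and "inner x y = 0"
  shows "x * y = - (y * x)"
  using clifford_span[OF assms(1-4)] assms(5) by (simp add: eq_neg_iff_add_eq_0)

lemma clifford_double_sum:
  fixes e :: "nat \<Rightarrow> 'a::real_algebra_1"
  assumes cl: "clifford_on B e" and fin: "finite B"
    and sym: "\<And>r s. r \<in> B \<Longrightarrow> s \<in> B \<Longrightarrow> M r s = M s r"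
  shows "(\<Sum>r\<in>B. \<Sum>s\<in>B. e r * (e s * M r s)) = - (\<Sum>r\<in>B. M r r)"
proof -
  let ?Q = "\<Sum>r\<in>B. \<Sum>s\<in>B. e r * (e s * M r s)"
  have "?Q = (\<Sum>r\<in>B. \<Sum>s\<in>B. e s * (e r * M r s))"
    by (subst sum.swap) (use sym in \<open>auto intro!: sum.cong\<close>)
  then have "?Q + ?Q = (\<Sum>r\<in>B. \<Sum>s\<in>B. (e r * e s + e s * e r) * M r s)"
    by (simp add: sum.distrib distrib_right mult.assoc)
  also have "\<dots> = (\<Sum>r\<in>B. - (M r r + M r r))"
  proof (rule sum.cong[OF refl])
    fix r assume r: "r \<in> B"
    have "(e r * e s + e s * e r) * M r s = (if s = r then - (M r r + M r r) else 0)" if "s \<in> B" for s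
    proof (cases "s = r")
      case True
      then show ?thesis
        using r by (simp add: clifford_on_square[OF cl] mult_2 algebra_simps)
    next
      case False
      then show ?thesis
        using clifford_on_anticommute[OF cl r that] by simp
    qed
    then show "(\<Sum>s\<in>B. (e r * e s + e s * e r) * M r s) = - (M r r + M r r)"
      using fin r by (simp cong: sum.cong)
  qed
  finally have "2 *\<^sub>R ?Q = 2 *\<^sub>R (- (\<Sum>r\<in>B. M r r))"
    by (simp add: scaleR_2 sum_subtractf sum_negf)
  then show ?thesis
    by (rule scaleR_left_imp_eq[rotated]) simp
qed

lemma SA_square:
  assumes "x \<in> SA cj"
  shows "x * x = -1"
proof -
  have "cj x = - x" "x * cj x = 1"
    using assms by (auto simp: SA_def add_eq_0_iff)
  then have "- (x * x) = 1"
    by simp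
  then show ?thesis
    by (metis minus_minus)
qed

lemma scaleR_unit_eq_cases:
  fixes u u' :: "'a::real_normed_vector"
  assumes "norm u = 1" "norm u' = 1" and eq: "b *\<^sub>R u = b' *\<^sub>R u'" and "b \<noteq> 0"
  shows "(b' = b \<and> u' = u) \<or> (b' = - b \<and> u' = - u)"
proof -
  have "\<bar>b\<bar> = \<bar>b'\<bar>"
    using arg_cong[OF eq, of norm] assms(1,2) by simp
  then consider "b' = b" | "b' = - b"
    by linarith
  then show ?thesis
  proof cases
    case 1
    then have "b *\<^sub>R u = b *\<^sub>R u'"
      using eq by simp
    then have "u' = u"
      using \<open>b \<noteq> 0\<close> by simp
    with 1 show ?thesis
      by blast
  next
    case 2
    then have "b *\<^sub>R u = b *\<^sub>R (- u')"
      using eq by simp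
    then have "u = - u'"
      by (rule scaleR_left_imp_eq[OF \<open>b \<noteq> 0\<close>])
    then have "u' = - u"
      by simp
    with 2 show ?thesis
      by blast
  qed
qed

section \<open>One-variable calculus\<close>

lemma has_vector_derivative_mult_right_euclidean:
  fixes a :: "'a::{real_algebra_1, euclidean_space}"
  assumes "(f has_vector_derivative f') F"
  shows "((\<lambda>r. a * f r) has_vector_derivative a * f') F"
proof -
  have "linear (\<lambda>x::'a. a * x)"
    by (rule linearI) (simp_all add: distrib_left)
  then have "bounded_linear (\<lambda>x::'a. a * x)"
    by (simp add: linear_conv_bounded_linear)
  then show ?thesis
    using assms by (rule bounded_linear.has_vector_derivative)
qed

lemma has_vector_derivative_shift_at_0:
  assumes "((\<lambda>r. f (x + r)) has_vector_derivative f') (at 0)"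
  shows "(f has_vector_derivative f') (at x)"
proof -
  have "((\<lambda>r. r - x) has_vector_derivative 1) (at x)"
    by (auto intro!: derivative_eq_intros)
  moreover have "((\<lambda>r. f (x + r)) has_vector_derivative f') (at ((\<lambda>r. r - x) x))"
    using assms by simp
  ultimately have "((\<lambda>r. f (x + r)) \<circ> (\<lambda>r. r - x) has_vector_derivative 1 *\<^sub>R f') (at x)"
    by (rule vector_diff_chain_at)
  then show ?thesis
    by (simp add: o_def)
qed

lemma has_vector_derivative_scale_arg_at_0:
  assumes "(f has_vector_derivative f') (at 0)"
  shows "((\<lambda>r. f (c * r)) has_vector_derivative c *\<^sub>R f') (at 0)"
proof -
  have "((\<lambda>r. c * r) has_vector_derivative c) (at 0)"
    by (auto intro!: derivative_eq_intros)
  moreover have "(f has_vector_derivative f') (at (c * 0))"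
    using assms by simp
  ultimately have "(f \<circ> (\<lambda>r. c * r) has_vector_derivative c *\<^sub>R f') (at 0)"
    by (rule vector_diff_chain_at)
  then show ?thesis
    by (simp add: o_def)
qed

lemma eventually_openin_path:
  assumes "openin (top_of_set X) D" "isCont \<gamma> a" "\<gamma> a \<in> D" "\<And>r. \<gamma> r \<in> X"
  shows "\<forall>\<^sub>F r in nhds a. \<gamma> r \<in> D"
proof -
  obtain T where T: "open T" "D = X \<inter> T"
    using assms(1) by (auto simp: openin_open)
  have "\<forall>\<^sub>F r in at a. \<gamma> r \<in> T"
    using topological_tendstoD[OF isContD[OF assms(2)] T(1)] assms(3) T(2) by blast
  then have "\<forall>\<^sub>F r in nhds a. \<gamma> r \<in> T"
    using assms(3) T(2) by (simp add: eventually_nhds_conv_at)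
  then show ?thesis
    by eventually_elim (use assms(4) T(2) in blast)
qed

lemma isCont_compose_continuous_on:
  assumes "continuous_on D g" "continuous_on UNIV P" "\<forall>\<^sub>F z in nhds a. P z \<in> D"
  shows "isCont (\<lambda>z. g (P z)) a"
proof -
  obtain U where U: "open U" "a \<in> U" "\<forall>z\<in>U. P z \<in> D"
    using assms(3) by (auto simp: eventually_nhds)
  have "continuous_on U (\<lambda>z. g (P z))"
    using U(3) by (intro continuous_on_compose2[OF assms(1) continuous_on_subset[OF assms(2)]]) auto
  then show ?thesis
    using U(1,2) continuous_on_eq_continuous_at by blast
qed

lemma mean_value_estimate:
  fixes f :: "real \<Rightarrow> 'b::real_normed_vector"
  assumes f': "\<And>x. x \<in> S \<Longrightarrow> (f has_vector_derivative f' x) (at x within S)"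
    and seg: "closed_segment a b \<subseteq> S" and bound: "\<And>x. x \<in> S \<Longrightarrow> norm (f' x - c) \<le> B"
  shows "norm (f b - f a - (b - a) *\<^sub>R c) \<le> 3 * B * \<bar>b - a\<bar>"
proof -
  have a: "a \<in> S"
    using seg by auto
  have "norm (f' x - f' a) \<le> 2 * B" if "x \<in> S" for x
    using norm_triangle_ineq4[of "f' x - c" "f' a - c"] bound[OF that] bound[OF a] by simp
  then have "norm (f b - f a - (b - a) *\<^sub>R f' a) \<le> \<bar>b - a\<bar> * (2 * B)"
    using vector_differentiable_bound_linearization[OF f' seg _ a] by simp
  moreover have "norm ((b - a) *\<^sub>R (f' a - c)) \<le> \<bar>b - a\<bar> * B"
    using bound[OF a] by (simp add: mult_left_mono)
  ultimately show ?thesis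
    using norm_triangle_ineq[of "f b - f a - (b - a) *\<^sub>R f' a" "(b - a) *\<^sub>R (f' a - c)"]
    by (simp add: algebra_simps)
qed

lemma second_difference_estimate:
  fixes \<phi> \<phi>x \<phi>xy :: "real \<Rightarrow> real \<Rightarrow> 'b::real_normed_vector"
  assumes h: "0 < h" "h < d"
    and dx: "\<And>x y. \<bar>x\<bar> < d \<Longrightarrow> \<bar>y\<bar> < d \<Longrightarrow> ((\<lambda>r. \<phi> r y) has_vector_derivative \<phi>x x y) (at x)"
    and dxy: "\<And>x y. \<bar>x\<bar> < d \<Longrightarrow> \<bar>y\<bar> < d \<Longrightarrow> (\<phi>x x has_vector_derivative \<phi>xy x y) (at y)"
    and bound: "\<And>x y. \<bar>x\<bar> < d \<Longrightarrow> \<bar>y\<bar> < d \<Longrightarrow> norm (\<phi>xy x y - c) \<le> \<epsilon>"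
  shows "norm (\<phi> h h - \<phi> h 0 - \<phi> 0 h + \<phi> 0 0 - (h * h) *\<^sub>R c) \<le> 9 * \<epsilon> * (h * h)"
proof -
  define S where "S = {x::real. \<bar>x\<bar> < d}"
  have seg: "closed_segment 0 h \<subseteq> S"
    using h by (auto simp: S_def closed_segment_eq_real_ivl)
  have inner: "norm (\<phi>x x h - \<phi>x x 0 - h *\<^sub>R c) \<le> 3 * \<epsilon> * h" if x: "x \<in> S" for x
  proof -
    have "norm (\<phi>x x h - \<phi>x x 0 - (h - 0) *\<^sub>R c) \<le> 3 * \<epsilon> * \<bar>h - 0\<bar>"
    proof (rule mean_value_estimate[OF has_vector_derivative_at_within seg])
      fix y
      assume "y \<in> S"
      then show "(\<phi>x x has_vector_derivative \<phi>xy x y) (at y)" "norm (\<phi>xy x y - c) \<le> \<epsilon>"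
        using x dxy bound by (simp_all add: S_def)
    qed
    then show ?thesis
      using h by simp
  qed
  have outer: "((\<lambda>x. \<phi> x h - \<phi> x 0) has_vector_derivative \<phi>x x h - \<phi>x x 0) (at x within S)"
    if "x \<in> S" for x
  proof -
    have "((\<lambda>x. \<phi> x h - \<phi> x 0) has_vector_derivative \<phi>x x h - \<phi>x x 0) (at x)"
      using that h by (intro has_vector_derivative_diff dx) (simp_all add: S_def)
    then show ?thesis
      by (rule has_vector_derivative_at_within)
  qed
  have "norm ((\<phi> h h - \<phi> h 0) - (\<phi> 0 h - \<phi> 0 0) - (h - 0) *\<^sub>R (h *\<^sub>R c)) \<le> 3 * (3 * \<epsilon> * h) * \<bar>h - 0\<bar>"
    by (rule mean_value_estimate[OF outer seg inner])
  then show ?thesis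
    using h by (simp add: algebra_simps)
qed

lemma mixed_partials_dist_le:
  fixes \<phi> \<phi>x \<phi>y \<phi>xy \<phi>yx :: "real \<Rightarrow> real \<Rightarrow> 'b::real_normed_vector"
  assumes d: "0 < d"
    and square: "\<And>x y. \<bar>x\<bar> < d \<Longrightarrow> \<bar>y\<bar> < d \<Longrightarrow>
      ((\<lambda>r. \<phi> r y) has_vector_derivative \<phi>x x y) (at x) \<and> (\<phi>x x has_vector_derivative \<phi>xy x y) (at y) \<and>
      (\<phi> x has_vector_derivative \<phi>y x y) (at y) \<and> ((\<lambda>r. \<phi>y r y) has_vector_derivative \<phi>yx x y) (at x) \<and>
      norm (\<phi>xy x y - c) \<le> \<epsilon> \<and> norm (\<phi>yx x y - c') \<le> \<epsilon>"
  shows "norm (c - c') \<le> 18 * \<epsilon>"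
proof -
  define h where "h = d / 2"
  have h: "0 < h" "h < d"
    using d by (simp_all add: h_def)
  have "norm (\<phi> h h - \<phi> h 0 - \<phi> 0 h + \<phi> 0 0 - (h * h) *\<^sub>R c) \<le> 9 * \<epsilon> * (h * h)"
    by (rule second_difference_estimate[OF h]) (use square in blast)+
  moreover have "norm (\<phi> h h - \<phi> 0 h - \<phi> h 0 + \<phi> 0 0 - (h * h) *\<^sub>R c') \<le> 9 * \<epsilon> * (h * h)"
    by (rule second_difference_estimate[OF h, where \<phi> = "\<lambda>x y. \<phi> y x" and \<phi>x = "\<lambda>x y. \<phi>y y x"
          and \<phi>xy = "\<lambda>x y. \<phi>yx y x"]) (use square in blast)+
  ultimately have "norm ((h * h) *\<^sub>R (c - c')) \<le> 18 * \<epsilon> * (h * h)"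
    using norm_triangle_ineq4[of "\<phi> h h - \<phi> 0 h - \<phi> h 0 + \<phi> 0 0 - (h * h) *\<^sub>R c'"
        "\<phi> h h - \<phi> h 0 - \<phi> 0 h + \<phi> 0 0 - (h * h) *\<^sub>R c"]
    by (simp add: algebra_simps)
  then show ?thesis
    using h by simp
qed

lemma mixed_partials_eq:
  fixes \<phi> \<phi>x \<phi>y \<phi>xy \<phi>yx :: "real \<Rightarrow> real \<Rightarrow> 'b::real_normed_vector"
  assumes near: "\<forall>\<^sub>F (x, y) in nhds (0, 0).
      ((\<lambda>r. \<phi> r y) has_vector_derivative \<phi>x x y) (at x) \<and> (\<phi>x x has_vector_derivative \<phi>xy x y) (at y) \<and>
      (\<phi> x has_vector_derivative \<phi>y x y) (at y) \<and> ((\<lambda>r. \<phi>y r y) has_vector_derivative \<phi>yx x y) (at x)"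
    and cont: "isCont (\<lambda>(x, y). \<phi>xy x y) (0, 0)" "isCont (\<lambda>(x, y). \<phi>yx x y) (0, 0)"
  shows "\<phi>xy 0 0 = \<phi>yx 0 0"
proof -
  let ?C = "\<phi>xy 0 0" and ?C' = "\<phi>yx 0 0"
  have estimate: "norm (?C - ?C') \<le> 18 * \<epsilon>" if \<epsilon>: "\<epsilon> > 0" for \<epsilon>
  proof -
    have "\<forall>\<^sub>F z in nhds (0, 0). dist ((\<lambda>(x, y). \<phi>xy x y) z) ?C < \<epsilon>"
      "\<forall>\<^sub>F z in nhds (0, 0). dist ((\<lambda>(x, y). \<phi>yx x y) z) ?C' < \<epsilon>"
      using tendstoD[OF isContD[OF cont(1)] \<epsilon>] tendstoD[OF isContD[OF cont(2)] \<epsilon>] \<epsilon>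
      by (simp_all add: eventually_nhds_conv_at)
    with near have "\<forall>\<^sub>F (x, y) in nhds (0, 0).
        ((\<lambda>r. \<phi> r y) has_vector_derivative \<phi>x x y) (at x) \<and> (\<phi>x x has_vector_derivative \<phi>xy x y) (at y) \<and>
        (\<phi> x has_vector_derivative \<phi>y x y) (at y) \<and> ((\<lambda>r. \<phi>y r y) has_vector_derivative \<phi>yx x y) (at x) \<and>
        norm (\<phi>xy x y - ?C) \<le> \<epsilon> \<and> norm (\<phi>yx x y - ?C') \<le> \<epsilon>"
      by eventually_elim (auto simp: dist_norm)
    then obtain e where e: "e > 0" and ball: "\<And>x y. dist (x, y) (0, 0) < e \<Longrightarrow>
        ((\<lambda>r. \<phi> r y) has_vector_derivative \<phi>x x y) (at x) \<and> (\<phi>x x has_vector_derivative \<phi>xy x y) (at y) \<and>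
        (\<phi> x has_vector_derivative \<phi>y x y) (at y) \<and> ((\<lambda>r. \<phi>y r y) has_vector_derivative \<phi>yx x y) (at x) \<and>
        norm (\<phi>xy x y - ?C) \<le> \<epsilon> \<and> norm (\<phi>yx x y - ?C') \<le> \<epsilon>"
      unfolding eventually_nhds_metric by force
    have "dist (x, y) (0, 0) < e" if "\<bar>x\<bar> < e / 2" "\<bar>y\<bar> < e / 2" for x y
      using norm_Pair_le[of x y] that by (simp add: dist_norm)
    with e ball show ?thesis
      by (intro mixed_partials_dist_le[where d = "e / 2" and \<phi> = \<phi> and \<phi>x = \<phi>x and \<phi>y = \<phi>y
            and \<phi>xy = \<phi>xy and \<phi>yx = \<phi>yx]) auto
  qed
  have "norm (?C - ?C') \<le> 0"
  proof (rule field_le_epsilon)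
    fix \<epsilon> :: real
    assume "0 < \<epsilon>"
    then show "norm (?C - ?C') \<le> 0 + \<epsilon>"
      using estimate[of "\<epsilon> / 18"] by simp
  qed
  then show ?thesis
    by simp
qed

section \<open>Geometry of the slices\<close>

definition flip_on :: "nat set \<Rightarrow> (nat \<Rightarrow> real) \<Rightarrow> nat \<Rightarrow> real" where
  "flip_on S \<beta> h = (if h \<in> S then - \<beta> h else \<beta> h)"

lemma flip_on_empty [simp]: "flip_on {} \<beta> = \<beta>"
  by (simp add: flip_on_def fun_eq_iff)

lemma flip_on_insert: "a \<notin> S \<Longrightarrow> flip_on (insert a S) \<beta> = (flip_on S \<beta>)(a := - flip_on S \<beta> a)"
  by (auto simp: flip_on_def fun_eq_iff)

locale slice_setting =
  fixes v :: "nat \<Rightarrow> 'a::{real_algebra_1, euclidean_space}"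
    and N \<tau> :: nat and t :: "nat \<Rightarrow> nat"
    and D :: "('a \<times> (nat \<Rightarrow> real)) set"
  assumes v0: "v 0 = 1"
    and v_clifford: "clifford_on {1..N} v"
    and v_orthonormal: "orthonormal_on {0..N} v"
    and t_step: "\<forall>h<\<tau>. t h < t (Suc h)"
    and t_last: "t \<tau> = N"
    and domain: "T_domain v (t 0) \<tau> D"
begin

lemma t_less: "h < k \<Longrightarrow> k \<le> \<tau> \<Longrightarrow> t h < t k"
proof (induction k)
  case (Suc k)
  then show ?case
    using t_step by (metis Suc_leD Suc_le_lessD less_Suc_eq order_less_trans)
qed simp

lemma t_le_N: "h \<le> \<tau> \<Longrightarrow> t h \<le> N"
  using t_less t_last by (metis order_le_less order_less_imp_le)

definition block :: "nat \<Rightarrow> nat set" where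
  "block h = {Suc (t (h - 1))..t h}"

lemma block_subset:
  assumes "h \<in> {1..\<tau>}"
  shows "block h \<subseteq> {Suc (t 0)..N}"
proof -
  have "t 0 \<le> t (h - 1)"
  proof (cases "h = 1")
    case False
    show ?thesis
      by (intro less_imp_le t_less) (use assms False in auto)
  qed simp
  then show ?thesis
    using t_le_N[of h] assms by (auto simp: block_def)
qed

lemma block_disjoint:
  assumes "h \<in> {1..\<tau>}" "k \<in> {1..\<tau>}" "h \<noteq> k"
  shows "block h \<inter> block k = {}"
proof -
  have "block a \<inter> block b = {}" if "1 \<le> a" "a < b" "b \<le> \<tau>" for a b
  proof -
    have "t a \<le> t (b - 1)"
    proof (cases "a = b - 1")
      case False
      show ?thesis
        by (intro less_imp_le t_less) (use that False in auto)
    qed simp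
    then show ?thesis
      by (auto simp: block_def)
  qed
  note ordered = this
  consider "h < k" | "k < h"
    using assms(3) by linarith
  then show ?thesis
  proof cases
    case 1
    then show ?thesis
      using ordered[of h k] assms by simp
  next
    case 2
    then show ?thesis
      using ordered[of k h] assms by (simp add: Int_commute)
  qed
qed

lemma block_subset_range: "h \<in> {1..\<tau>} \<Longrightarrow> block h \<subseteq> {0..N}"
  using block_subset by fastforce

lemma torus_block:
  assumes "J \<in> torus v t \<tau>" "h \<in> {1..\<tau>}"
  shows "J h \<in> span (v ` block h)" "norm (J h) = 1"
  using assms by (auto simp: torus_def sphere_span_def block_def)

lemma torus_in_span:
  assumes "J \<in> torus v t \<tau>" "h \<in> {1..\<tau>}"
  shows "J h \<in> span (v ` {1..N})"
proof -
  have "v ` block h \<subseteq> v ` {1..N}"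
    using block_subset[OF assms(2)] by auto
  then show ?thesis
    using torus_block(1)[OF assms] by (rule subsetD[OF span_mono])
qed

lemma torus_orthogonal:
  assumes "J \<in> torus v t \<tau>" "h \<in> {1..\<tau>}" "k \<in> {1..\<tau>}" "h \<noteq> k"
  shows "inner (J h) (J k) = 0"
  using inner_span_disjoint[OF v_orthonormal _ _ block_disjoint[OF assms(2-4)]
      torus_block(1)[OF assms(1,2)] torus_block(1)[OF assms(1,3)]]
    block_subset_range[OF assms(2)] block_subset_range[OF assms(3)]
  by blast

lemma v_orthonormal_imaginary: "orthonormal_on {1..N} v"
  using v_orthonormal by (rule orthonormal_on_subset) auto

lemma torus_square:
  assumes "J \<in> torus v t \<tau>" "h \<in> {1..\<tau>}"
  shows "J h * J h = -1"
  using clifford_span_square[OF v_clifford v_orthonormal_imaginary torus_in_span[OF assms]]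
    torus_block(2)[OF assms] .

lemma torus_anticommute:
  assumes "J \<in> torus v t \<tau>" "h \<in> {1..\<tau>}" "k \<in> {1..\<tau>}" "h \<noteq> k"
  shows "J h * J k = - (J k * J h)"
  using clifford_span_anticommute[OF v_clifford v_orthonormal_imaginary
      torus_in_span[OF assms(1,2)] torus_in_span[OF assms(1,3)] torus_orthogonal[OF assms]] .

lemma alpha_anticommute_torus:
  assumes "J \<in> torus v t \<tau>" "h \<in> {1..\<tau>}" "s \<in> {1..t 0}"
  shows "v s * J h = - (J h * v s)"
proof -
  have s: "s \<in> {1..N}"
    using assms(3) t_le_N[of 0] by auto
  have vs: "v s \<in> span (v ` {s})" "v s \<in> span (v ` {1..N})"
    using s by (simp_all add: span_base)
  have "s \<notin> block h"
    using block_subset[OF assms(2)] assms(3) by fastforce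
  then have "inner (v s) (J h) = 0"
    using inner_span_disjoint[OF v_orthonormal _ _ _ vs(1) torus_block(1)[OF assms(1,2)]]
      block_subset_range[OF assms(2)] s by auto
  then show ?thesis
    by (rule clifford_span_anticommute[OF v_clifford v_orthonormal_imaginary vs(2) torus_in_span[OF assms(1,2)]])
qed

lemma torus_inj_on:
  assumes "J \<in> torus v t \<tau>"
  shows "inj_on J {1..\<tau>}"
proof
  fix h k
  assume hk: "h \<in> {1..\<tau>}" "k \<in> {1..\<tau>}" "J h = J k"
  have "inner (J h) (J h) = 1"
    using torus_block(2)[OF assms hk(1)] by (simp flip: power2_norm_eq_inner)
  then show "h = k"
    using torus_orthogonal[OF assms hk(1,2)] hk(3) by auto
qed

section \<open>Stem functions on the slices\<close>

lemma D_openin: "openin (top_of_set (span (v ` {0..t 0}) \<times> {\<beta>. \<forall>h. h \<notin> {1..\<tau>} \<longrightarrow> \<beta> h = 0})) D"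
  using domain by (simp add: T_domain_def)

lemma D_subset:
  assumes "p \<in> D"
  shows "fst p \<in> span (v ` {0..t 0})" "\<forall>h. h \<notin> {1..\<tau>} \<longrightarrow> snd p h = 0"
  using openin_imp_subset[OF D_openin] assms by (auto simp: mem_Times_iff)

lemma D_flip: "p \<in> D \<Longrightarrow> h \<in> {1..\<tau>} \<Longrightarrow> (fst p, (snd p)(h := - snd p h)) \<in> D"
  using domain by (simp add: T_domain_def)

lemma D_flip_on:
  assumes "finite S" "S \<subseteq> {1..\<tau>}" "p \<in> D"
  shows "(fst p, flip_on S (snd p)) \<in> D"
  using assms(1,2)
proof (induction S rule: finite_induct)
  case (insert a S)
  have "(fst p, flip_on S (snd p)) \<in> D" "a \<in> {1..\<tau>}"
    using insert by auto
  from D_flip[OF this] show ?case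
    by (simp only: flip_on_insert[OF insert(2)] fst_conv snd_conv)
qed (simp add: assms(3))

lemma inner_tpoint_block:
  assumes J: "J \<in> torus v t \<tau>" and \<alpha>: "\<alpha> \<in> span (v ` {0..t 0})"
    and h: "h \<in> {1..\<tau>}" and s: "s \<in> block h"
  shows "inner (tpoint J \<tau> (\<alpha>, \<beta>)) (v s) = \<beta> h * inner (J h) (v s)"
proof -
  have vs: "v s \<in> span (v ` {s})"
    by (simp add: span_base)
  have s_range: "s \<in> {Suc (t 0)..N}"
    using block_subset[OF h] s by blast
  have "inner \<alpha> (v s) = 0"
    using inner_span_disjoint[OF v_orthonormal _ _ _ \<alpha> vs] t_le_N[of 0] s_range by auto
  moreover have "(\<Sum>k\<in>{1..\<tau>}. \<beta> k * inner (J k) (v s)) = \<beta> h * inner (J h) (v s)"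
  proof -
    have "\<beta> k * inner (J k) (v s) = 0" if "k \<in> {1..\<tau>} - {h}" for k
    proof -
      have k: "k \<in> {1..\<tau>}" "k \<noteq> h"
        using that by auto
      then have "s \<notin> block k"
        using block_disjoint[OF h k(1)] s by auto
      then have "inner (J k) (v s) = 0"
        using inner_span_disjoint[OF v_orthonormal _ _ _ torus_block(1)[OF J k(1)] vs]
          block_subset_range[OF k(1)] s_range by auto
      then show ?thesis
        by simp
    qed
    then show ?thesis
      by (subst sum.remove[OF _ h]) (simp_all add: sum.neutral)
  qed
  ultimately show ?thesis
    by (simp add: tpoint_def inner_add_left inner_sum_left)
qed

lemma tpoint_eq_tpointD:
  assumes J: "J \<in> torus v t \<tau>" and J': "J' \<in> torus v t \<tau>"
    and \<alpha>: "\<alpha> \<in> span (v ` {0..t 0})" and \<alpha>': "\<alpha>' \<in> span (v ` {0..t 0})"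
    and eq: "tpoint J \<tau> (\<alpha>, \<beta>) = tpoint J' \<tau> (\<alpha>', \<beta>')"
  shows "\<alpha> = \<alpha>'" and "\<And>h. h \<in> {1..\<tau>} \<Longrightarrow> \<beta> h *\<^sub>R J h = \<beta>' h *\<^sub>R J' h"
proof -
  show components: "\<beta> h *\<^sub>R J h = \<beta>' h *\<^sub>R J' h" if h: "h \<in> {1..\<tau>}" for h
  proof -
    have fin: "finite (block h)"
      by (simp add: block_def)
    have "\<beta> h *\<^sub>R J h = (\<Sum>s\<in>block h. inner (\<beta> h *\<^sub>R J h) (v s) *\<^sub>R v s)"
      using torus_block(1)[OF J h]
      by (intro span_orthonormal_expansion[OF v_orthonormal block_subset_range[OF h] fin] span_scale)
    also have "\<dots> = (\<Sum>s\<in>block h. inner (\<beta>' h *\<^sub>R J' h) (v s) *\<^sub>R v s)"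
      using inner_tpoint_block[OF J \<alpha> h, of _ \<beta>] inner_tpoint_block[OF J' \<alpha>' h, of _ \<beta>'] eq
      by (intro sum.cong) simp_all
    also have "\<dots> = \<beta>' h *\<^sub>R J' h"
      using torus_block(1)[OF J' h]
      by (intro span_orthonormal_expansion[OF v_orthonormal block_subset_range[OF h] fin, symmetric] span_scale)
    finally show ?thesis .
  qed
  then have "(\<Sum>h\<in>{1..\<tau>}. \<beta> h *\<^sub>R J h) = (\<Sum>h\<in>{1..\<tau>}. \<beta>' h *\<^sub>R J' h)"
    by (rule sum.cong[OF refl])
  then show "\<alpha> = \<alpha>'"
    using eq by (simp add: tpoint_def)
qed

lemma tpoint_eq_flip:
  assumes J: "J \<in> torus v t \<tau>" and J': "J' \<in> torus v t \<tau>"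
    and \<alpha>: "\<alpha> \<in> span (v ` {0..t 0})" and \<alpha>': "\<alpha>' \<in> span (v ` {0..t 0})"
    and \<beta>: "\<forall>h. h \<notin> {1..\<tau>} \<longrightarrow> \<beta> h = 0" and \<beta>': "\<forall>h. h \<notin> {1..\<tau>} \<longrightarrow> \<beta>' h = 0"
    and eq: "tpoint J \<tau> (\<alpha>, \<beta>) = tpoint J' \<tau> (\<alpha>', \<beta>')"
  obtains S where "S \<subseteq> {1..\<tau>}" "\<alpha>' = \<alpha>" "\<beta> = flip_on S \<beta>'"
    "\<And>h. h \<in> {1..\<tau>} \<Longrightarrow> \<beta> h \<noteq> 0 \<Longrightarrow> J' h = (if h \<in> S then -1 else 1) *\<^sub>R J h"
proof
  define S where "S = {h\<in>{1..\<tau>}. \<beta>' h \<noteq> \<beta> h}"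
  note components = tpoint_eq_tpointD(2)[OF J J' \<alpha> \<alpha>' eq]
  have signs: "(\<beta>' h = \<beta> h \<and> J' h = J h) \<or> (\<beta>' h = - \<beta> h \<and> J' h = - J h)"
    if h: "h \<in> {1..\<tau>}" and nz: "\<beta> h \<noteq> 0" for h
    by (rule scaleR_unit_eq_cases[OF torus_block(2)[OF J h] torus_block(2)[OF J' h] components[OF h] nz])
  have zero: "\<beta>' h = 0" if h: "h \<in> {1..\<tau>}" and z: "\<beta> h = 0" for h
    using components[OF h] torus_block(2)[OF J' h] z by auto
  show "S \<subseteq> {1..\<tau>}"
    by (auto simp: S_def)
  show "\<alpha>' = \<alpha>"
    using tpoint_eq_tpointD(1)[OF J J' \<alpha> \<alpha>' eq] by simp
  show "\<beta> = flip_on S \<beta>'"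
  proof
    fix h
    show "\<beta> h = flip_on S \<beta>' h"
    proof (cases "h \<in> {1..\<tau>} \<and> \<beta> h \<noteq> 0")
      case True
      then show ?thesis
        using signs[of h] by (auto simp: flip_on_def S_def)
    next
      case False
      then show ?thesis
        using zero[of h] \<beta> \<beta>' by (cases "h \<in> {1..\<tau>}") (auto simp: flip_on_def S_def)
    qed
  qed
  show "J' h = (if h \<in> S then -1 else 1) *\<^sub>R J h" if "h \<in> {1..\<tau>}" "\<beta> h \<noteq> 0" for h
    using signs[OF that] that by (auto simp: S_def)
qed

definition stem_parity :: "nat set \<Rightarrow> ('a \<times> (nat \<Rightarrow> real) \<Rightarrow> 'a) \<Rightarrow> bool" where
  "stem_parity K g \<longleftrightarrow>
     (\<forall>p\<in>D. \<forall>h\<in>{1..\<tau>}. g (fst p, (snd p)(h := - snd p h)) = (if h \<in> K then - g p else g p))"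

lemma T_stem_iff_stem_parity: "T_stem \<tau> D G \<longleftrightarrow> (\<forall>K. K \<subseteq> {1..\<tau>} \<longrightarrow> stem_parity K (G K))"
  by (simp add: T_stem_def stem_parity_def)

lemma stem_parity_flip_on:
  assumes g: "stem_parity K g" and "finite S" "S \<subseteq> {1..\<tau>}" and p: "p \<in> D"
  shows "g (fst p, flip_on S (snd p)) = (-1) ^ card (K \<inter> S) *\<^sub>R g p"
  using assms(2,3)
proof (induction S rule: finite_induct)
  case (insert a S)
  define q where "q = (fst p, flip_on S (snd p))"
  have q: "q \<in> D"
    using D_flip_on[OF insert(1) _ p] insert(4) by (simp add: q_def)
  have "g (fst p, flip_on (insert a S) (snd p)) = g (fst q, (snd q)(a := - snd q a))"
    using insert(2) by (simp add: q_def flip_on_insert)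
  also have "\<dots> = (if a \<in> K then - g q else g q)"
    using g q insert(4) by (simp add: stem_parity_def)
  also have "g q = (-1) ^ card (K \<inter> S) *\<^sub>R g p"
    using insert by (simp add: q_def)
  finally show ?case
    using insert(1,2) by (simp add: Int_insert_right)
qed simp

lemma stem_parity_zero:
  assumes "stem_parity K g" "p \<in> D" "h \<in> K" "h \<in> {1..\<tau>}" "snd p h = 0"
  shows "g p = 0"
proof -
  have "g p = - g p"
    using assms unfolding stem_parity_def by (metis fun_upd_triv minus_zero prod.collapse)
  then show ?thesis
    by (simp add: eq_neg_iff_add_eq_0 flip: scaleR_2)
qed

text \<open>Changing the representation of a point flips some \<open>\<beta>\<^sub>h\<close> and \<open>J\<^sub>h\<close> together, which multiplies
  \<open>J\<^sub>K\<close> and \<open>F\<^sub>K\<close> by the same sign; when \<open>\<beta>\<^sub>h = 0\<close> for some \<open>h \<in> K\<close>, the sign of \<open>J\<^sub>h\<close> is not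
  determined, but then \<open>F\<^sub>K\<close> vanishes by parity.\<close>
lemma stem_sum_tpoint_eq:
  assumes G: "T_stem \<tau> D G" and p: "p \<in> D" and p': "p' \<in> D"
    and J: "J \<in> torus v t \<tau>" and J': "J' \<in> torus v t \<tau>"
    and eq: "tpoint J \<tau> p = tpoint J' \<tau> p'"
  shows "(\<Sum>K\<in>Pow {1..\<tau>}. JK J K * G K p) = (\<Sum>K\<in>Pow {1..\<tau>}. JK J' K * G K p')"
proof -
  have eq': "tpoint J \<tau> (fst p, snd p) = tpoint J' \<tau> (fst p', snd p')"
    using eq by simp
  obtain S where S: "S \<subseteq> {1..\<tau>}" "fst p' = fst p" "snd p = flip_on S (snd p')"
    and J'_sign: "\<And>h. h \<in> {1..\<tau>} \<Longrightarrow> snd p h \<noteq> 0 \<Longrightarrow> J' h = (if h \<in> S then -1 else 1) *\<^sub>R J h"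
    using tpoint_eq_flip[OF J J' D_subset(1)[OF p] D_subset(1)[OF p'] D_subset(2)[OF p] D_subset(2)[OF p'] eq']
    by blast
  have fin_S: "finite S"
    using S(1) finite_subset by blast
  show ?thesis
  proof (rule sum.cong[OF refl])
    fix K
    assume "K \<in> Pow {1..\<tau>}"
    then have K: "K \<subseteq> {1..\<tau>}" and fin_K: "finite K"
      using finite_subset by auto
    have parity: "stem_parity K (G K)"
      using G K by (simp add: T_stem_iff_stem_parity)
    have G_p: "G K p = (-1) ^ card (K \<inter> S) *\<^sub>R G K p'"
      using stem_parity_flip_on[OF parity fin_S S(1) p'] S(2,3) by (metis prod.collapse)
    show "JK J K * G K p = JK J' K * G K p'"
    proof (cases "\<exists>h\<in>K. snd p h = 0")
      case True
      then have "G K p = 0"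
        using stem_parity_zero[OF parity p] K by blast
      then show ?thesis
        using G_p by simp
    next
      case False
      then have "\<forall>h\<in>K. J' h = (if h \<in> S then -1 else 1) *\<^sub>R J h"
        using J'_sign K by blast
      then have "JK J' K = (\<Prod>h\<in>K. if h \<in> S then -1 else 1) *\<^sub>R JK J K"
        by (rule JK_scaleR[OF fin_K])
      also have "(\<Prod>h\<in>K. if h \<in> S then -1 else 1 :: real) = (-1) ^ card (K \<inter> S)"
        using fin_K by (simp add: prod.If_cases Int_def)
      finally show ?thesis
        using G_p by (simp flip: power_mult_distrib)
    qed
  qed
qed

lemma induced_tpoint:
  assumes G: "T_stem \<tau> D G" and p: "p \<in> D" and J: "J \<in> torus v t \<tau>"
  shows "induced v t \<tau> D G (tpoint J \<tau> p) = (\<Sum>K\<in>Pow {1..\<tau>}. JK J K * G K p)"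
proof -
  let ?P = "\<lambda>y. \<exists>p'\<in>D. \<exists>J'\<in>torus v t \<tau>.
    tpoint J \<tau> p = tpoint J' \<tau> p' \<and> y = (\<Sum>K\<in>Pow {1..\<tau>}. JK J' K * G K p')"
  have "?P (\<Sum>K\<in>Pow {1..\<tau>}. JK J K * G K p)"
    using p J by blast
  then have "?P (SOME y. ?P y)"
    by (rule someI)
  then show ?thesis
    unfolding induced_def using stem_sum_tpoint_eq[OF G p _ J] by auto
qed

lemma OmegaD_RJ_tpoint:
  assumes J: "J \<in> torus v t \<tau>" and y: "y \<in> OmegaD v t \<tau> D" "y \<in> RJ v (t 0) \<tau> J"
  obtains p where "p \<in> D" "y = tpoint J \<tau> p"
proof -
  obtain \<alpha> b where \<alpha>: "\<alpha> \<in> span (v ` {0..t 0})" and b: "b \<in> span (J ` {1..\<tau>})" and y_eq: "y = \<alpha> + b"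
    using y(2) unfolding RJ_def span_Un by blast
  obtain u where u: "b = (\<Sum>x\<in>J ` {1..\<tau>}. u x *\<^sub>R x)"
    using b span_finite[of "J ` {1..\<tau>}"] by auto
  define \<beta> where "\<beta> h = (if h \<in> {1..\<tau>} then u (J h) else 0)" for h
  have "b = (\<Sum>h\<in>{1..\<tau>}. \<beta> h *\<^sub>R J h)"
    using u sum.reindex[OF torus_inj_on[OF J], of "\<lambda>x. u x *\<^sub>R x"] by (simp add: \<beta>_def)
  then have y_J: "y = tpoint J \<tau> (\<alpha>, \<beta>)"
    using y_eq by (simp add: tpoint_def)
  obtain q J' where q: "q \<in> D" and J': "J' \<in> torus v t \<tau>" and y_J': "y = tpoint J' \<tau> q"
    using y(1) unfolding OmegaD_def by blast
  have "tpoint J \<tau> (\<alpha>, \<beta>) = tpoint J' \<tau> (fst q, snd q)"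
    using y_J y_J' by simp
  moreover have "\<forall>h. h \<notin> {1..\<tau>} \<longrightarrow> \<beta> h = 0"
    by (simp add: \<beta>_def)
  ultimately obtain S where S: "S \<subseteq> {1..\<tau>}" "fst q = \<alpha>" "\<beta> = flip_on S (snd q)"
    using tpoint_eq_flip[OF J J' \<alpha> D_subset(1)[OF q] _ D_subset(2)[OF q]] by blast
  have "(fst q, flip_on S (snd q)) \<in> D"
    using D_flip_on[OF _ S(1) q] S(1) finite_subset by blast
  moreover have "y = tpoint J \<tau> (fst q, flip_on S (snd q))"
    using y_J S(2,3) by simp
  ultimately show ?thesis
    using that by blast
qed

section \<open>Derivatives along coordinate lines\<close>

text \<open>Coordinates on \<open>D\<close> are numbered like the directions \<open>wJ\<close> of the slice: index
  \<open>i \<le> t 0\<close> is \<open>\<alpha>\<^sub>i\<close> (direction \<open>v i\<close>) and index \<open>t 0 + h\<close> is \<open>\<beta>\<^sub>h\<close>.\<close>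

definition coord_line :: "nat \<Rightarrow> 'a \<times> (nat \<Rightarrow> real) \<Rightarrow> real \<Rightarrow> 'a \<times> (nat \<Rightarrow> real)" where
  "coord_line i p r =
     (if i \<le> t 0 then (fst p + r *\<^sub>R v i, snd p)
      else (fst p, (snd p)(i - t 0 := snd p (i - t 0) + r)))"

definition pd_coord :: "nat \<Rightarrow> ('a \<times> (nat \<Rightarrow> real) \<Rightarrow> 'a) \<Rightarrow> 'a \<times> (nat \<Rightarrow> real) \<Rightarrow> 'a" where
  "pd_coord i G p = vector_derivative (\<lambda>r. G (coord_line i p r)) (at 0)"

definition coord_flip :: "nat \<Rightarrow> nat set \<Rightarrow> nat set" where
  "coord_flip i K = (if t 0 < i then symd K (i - t 0) else K)"

lemma pd_coord_alpha: "i \<le> t 0 \<Longrightarrow> pd_coord i G = pd_alpha (v i) G"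
  by (simp add: fun_eq_iff pd_coord_def pd_alpha_def coord_line_def)

lemma pd_coord_beta: "h \<in> {1..\<tau>} \<Longrightarrow> pd_coord (t 0 + h) G = pd_beta h G"
  by (simp add: fun_eq_iff pd_coord_def pd_beta_def coord_line_def)

lemma coord_flip_alpha: "i \<le> t 0 \<Longrightarrow> coord_flip i K = K"
  by (simp add: coord_flip_def)

lemma coord_flip_beta: "h \<in> {1..\<tau>} \<Longrightarrow> coord_flip (t 0 + h) K = symd K h"
  by (simp add: coord_flip_def)

lemma coord_flip_coord_flip [simp]: "coord_flip i (coord_flip i K) = K"
  by (simp add: coord_flip_def)

lemma coord_line_0 [simp]: "coord_line i p 0 = p"
  by (simp add: coord_line_def)

lemma tpoint_coord_line:
  assumes i: "i \<le> t 0 + \<tau>"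
  shows "tpoint J \<tau> (coord_line i p r) = tpoint J \<tau> p + r *\<^sub>R wJ v (t 0) J i"
proof (cases "i \<le> t 0")
  case False
  define u where "u = i - t 0"
  have u: "u \<in> {1..\<tau>}"
    using False i unfolding u_def by auto
  have "(\<Sum>h\<in>{1..\<tau>}. ((snd p)(u := snd p u + r)) h *\<^sub>R J h)
      = (\<Sum>h\<in>{1..\<tau>}. snd p h *\<^sub>R J h + (if h = u then r *\<^sub>R J h else 0))"
    by (rule sum.cong) (auto simp: scaleR_add_left)
  also have "\<dots> = (\<Sum>h\<in>{1..\<tau>}. snd p h *\<^sub>R J h) + r *\<^sub>R J u"
    using u by (simp add: sum.distrib)
  finally show ?thesis
    using False by (simp add: coord_line_def tpoint_def wJ_def u_def algebra_simps)
qed (simp add: coord_line_def tpoint_def wJ_def algebra_simps)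

lemma isCont_coord_line: "isCont (coord_line i p) 0"
proof (cases "i \<le> t 0")
  case True
  then have "coord_line i p = (\<lambda>r. (fst p + r *\<^sub>R v i, snd p))"
    by (simp add: fun_eq_iff coord_line_def)
  then show ?thesis
    by (auto intro!: continuous_intros)
next
  case False
  let ?u = "i - t 0"
  have "continuous_on UNIV (\<lambda>r. (snd p)(?u := snd p ?u + r))"
  proof (rule continuous_on_coordinatewise_then_product)
    fix j
    show "continuous_on UNIV (\<lambda>r. ((snd p)(?u := snd p ?u + r)) j)"
      by (cases "j = ?u") (auto intro!: continuous_intros)
  qed
  then have "isCont (\<lambda>r. (snd p)(?u := snd p ?u + r)) 0"
    by (simp add: continuous_on_eq_continuous_at)
  moreover have "coord_line i p = (\<lambda>r. (fst p, (snd p)(?u := snd p ?u + r)))"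
    using False by (simp add: fun_eq_iff coord_line_def)
  ultimately show ?thesis
    by (auto intro!: continuous_intros)
qed

lemma eventually_coord_line_in_D:
  assumes p: "p \<in> D" and i: "i \<le> t 0 + \<tau>"
  shows "\<forall>\<^sub>F r in nhds 0. coord_line i p r \<in> D"
proof (rule eventually_openin_path[OF D_openin isCont_coord_line])
  show "coord_line i p 0 \<in> D"
    using p by simp
  fix r
  have "v i \<in> span (v ` {0..t 0})" if "i \<le> t 0"
    using that by (simp add: span_base)
  then show "coord_line i p r \<in> span (v ` {0..t 0}) \<times> {\<beta>. \<forall>h. h \<notin> {1..\<tau>} \<longrightarrow> \<beta> h = 0}"
    using D_subset[OF p] i by (auto simp: coord_line_def intro: span_add span_scale)
qed

lemma C1_on_differentiable_coord:
  assumes "C1_on v (t 0) \<tau> D G" "p \<in> D" "i \<le> t 0 + \<tau>"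
  shows "(\<lambda>r. G (coord_line i p r)) differentiable (at 0)"
proof (cases "i \<le> t 0")
  case False
  then have "i - t 0 \<in> {1..\<tau>}"
    using assms(3) by auto
  then show ?thesis
    using assms False unfolding C1_on_def coord_line_def by auto
qed (use assms in \<open>auto simp: C1_on_def coord_line_def\<close>)

lemma has_vector_derivative_pd_coord:
  assumes "C1_on v (t 0) \<tau> D G" "p \<in> D" "i \<le> t 0 + \<tau>"
  shows "((\<lambda>r. G (coord_line i p r)) has_vector_derivative pd_coord i G p) (at 0)"
  using C1_on_differentiable_coord[OF assms] by (simp add: pd_coord_def vector_derivative_works)

lemma sd_tpoint:
  assumes J: "J \<in> torus v t \<tau>"
    and g: "\<forall>q\<in>D. g (tpoint J \<tau> q) = (\<Sum>K\<in>Pow {1..\<tau>}. JK J K * G K q)"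
    and p: "p \<in> D" and i: "i \<le> t 0 + \<tau>"
    and C1: "\<forall>K\<in>Pow {1..\<tau>}. C1_on v (t 0) \<tau> D (G K)"
  shows "sd (wJ v (t 0) J i) g (tpoint J \<tau> p) = (\<Sum>K\<in>Pow {1..\<tau>}. JK J K * pd_coord i (G K) p)"
proof -
  have "\<forall>\<^sub>F r in nhds 0. g (tpoint J \<tau> p + r *\<^sub>R wJ v (t 0) J i)
      = (\<Sum>K\<in>Pow {1..\<tau>}. JK J K * G K (coord_line i p r))"
    using eventually_coord_line_in_D[OF p i] by eventually_elim (use g tpoint_coord_line[OF i] in metis)
  then have "sd (wJ v (t 0) J i) g (tpoint J \<tau> p)
      = vector_derivative (\<lambda>r. \<Sum>K\<in>Pow {1..\<tau>}. JK J K * G K (coord_line i p r)) (at 0)"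
    unfolding sd_def by (intro vector_derivative_cong_eq) (auto elim: eventually_mono)
  also have "\<dots> = (\<Sum>K\<in>Pow {1..\<tau>}. JK J K * pd_coord i (G K) p)"
    using C1 by (intro vector_derivative_at has_vector_derivative_sum has_vector_derivative_mult_right_euclidean
        has_vector_derivative_pd_coord[OF _ p i]) blast
  finally show ?thesis .
qed

lemma stem_parity_add: "stem_parity K g \<Longrightarrow> stem_parity K g' \<Longrightarrow> stem_parity K (\<lambda>p. g p + g' p)"
  by (simp add: stem_parity_def)

lemma stem_parity_diff: "stem_parity K g \<Longrightarrow> stem_parity K g' \<Longrightarrow> stem_parity K (\<lambda>p. g p - g' p)"
  by (simp add: stem_parity_def)

lemma stem_parity_scaleR: "stem_parity K g \<Longrightarrow> stem_parity K (\<lambda>p. c *\<^sub>R g p)"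
  by (simp add: stem_parity_def)

lemma stem_parity_mult_left: "stem_parity K g \<Longrightarrow> stem_parity K (\<lambda>p. a * g p)"
  by (simp add: stem_parity_def)

lemma stem_parity_sum:
  "(\<And>j. j \<in> I \<Longrightarrow> stem_parity K (g j)) \<Longrightarrow> stem_parity K (\<lambda>p. \<Sum>j\<in>I. g j p)"
  by (auto simp: stem_parity_def sum_negf intro!: sum.cong)

text \<open>Reflecting \<open>\<beta>\<^sub>h\<close> commutes with the coordinate lines, except that it reverses the
  line along \<open>\<beta>\<^sub>h\<close> itself; this is why differentiating in \<open>\<beta>\<^sub>h\<close> toggles the parity in \<open>h\<close>.\<close>
lemma stem_parity_pd_coord:
  assumes g: "stem_parity K g" and C1: "C1_on v (t 0) \<tau> D g" and i: "i \<le> t 0 + \<tau>"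
  shows "stem_parity (coord_flip i K) (pd_coord i g)"
  unfolding stem_parity_def
proof (intro ballI)
  fix p h
  assume p: "p \<in> D" and h: "h \<in> {1..\<tau>}"
  let ?flip = "\<lambda>q. (fst q, (snd q)(h := - snd q h))"
  define c :: real where "c = (if i = t 0 + h then -1 else 1)"
  define \<sigma> :: real where "\<sigma> = (if h \<in> K then -1 else 1)"
  have line: "coord_line i (?flip p) r = ?flip (coord_line i p (c * r))" for r
    using h by (auto simp: coord_line_def c_def fun_eq_iff)
  have "((\<lambda>r. c * r) \<longlongrightarrow> c * 0) (nhds 0)"
    by (intro tendsto_intros filterlim_ident)
  then have "filterlim (\<lambda>r. c * r) (nhds 0) (nhds 0)"
    by simp
  then have "\<forall>\<^sub>F r in nhds 0. coord_line i p (c * r) \<in> D"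
    using eventually_coord_line_in_D[OF p i] unfolding filterlim_iff by blast
  then have "\<forall>\<^sub>F r in nhds 0. g (coord_line i (?flip p) r) = \<sigma> *\<^sub>R g (coord_line i p (c * r))"
    by eventually_elim (use g h in \<open>simp add: line stem_parity_def \<sigma>_def\<close>)
  then have "pd_coord i g (?flip p) = vector_derivative (\<lambda>r. \<sigma> *\<^sub>R g (coord_line i p (c * r))) (at 0)"
    unfolding pd_coord_def by (intro vector_derivative_cong_eq) (auto elim: eventually_mono)
  also have "\<dots> = \<sigma> *\<^sub>R (c *\<^sub>R pd_coord i g p)"
    by (intro vector_derivative_at bounded_linear.has_vector_derivative[OF bounded_linear_scaleR_right]
        has_vector_derivative_scale_arg_at_0 has_vector_derivative_pd_coord C1 p i)
  also have "\<dots> = (if h \<in> coord_flip i K then - pd_coord i g p else pd_coord i g p)"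
    using h by (auto simp: \<sigma>_def c_def coord_flip_def symd_def)
  finally show "pd_coord i g (?flip p) = (if h \<in> coord_flip i K then - pd_coord i g p else pd_coord i g p)" .
qed

lemma stem_parity_pd_alpha:
  "stem_parity K g \<Longrightarrow> C1_on v (t 0) \<tau> D g \<Longrightarrow> s \<le> t 0 \<Longrightarrow> stem_parity K (pd_alpha (v s) g)"
  using stem_parity_pd_coord[of K g s] by (simp add: pd_coord_alpha coord_flip_alpha)

lemma stem_parity_pd_beta:
  "stem_parity K g \<Longrightarrow> C1_on v (t 0) \<tau> D g \<Longrightarrow> h \<in> {1..\<tau>} \<Longrightarrow> stem_parity (symd K h) (pd_beta h g)"
  using stem_parity_pd_coord[of K g "t 0 + h"] by (simp add: pd_coord_beta coord_flip_beta)

lemma stem_parity_dbar_alpha: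
  "stem_parity K g \<Longrightarrow> C1_on v (t 0) \<tau> D g \<Longrightarrow> stem_parity K (dbar_alpha v (t 0) u g)"
  unfolding dbar_alpha_def
  by (intro stem_parity_diff stem_parity_scaleR stem_parity_sum stem_parity_mult_left stem_parity_pd_alpha) auto

lemma T_stem_dbarT_dT:
  assumes F: "T_stem \<tau> D F" and C1: "\<forall>K. K \<subseteq> {1..\<tau>} \<longrightarrow> C1_on v (t 0) \<tau> D (F K)"
  shows "T_stem \<tau> D (dbarT v (t 0) \<tau> F)" "T_stem \<tau> D (dT v (t 0) \<tau> F)"
proof -
  have alpha: "stem_parity K (dbar_alpha v (t 0) u (F K))" if "K \<subseteq> {1..\<tau>}" for K u
    using F C1 that by (intro stem_parity_dbar_alpha) (auto simp: T_stem_iff_stem_parity)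
  have beta: "stem_parity K (pd_beta h (F (symd K h)))" if "K \<subseteq> {1..\<tau>}" "h \<in> {1..\<tau>}" for K h
    using stem_parity_pd_beta[of "symd K h" "F (symd K h)" h] F C1 symd_subset[OF that] that(2)
    by (simp add: T_stem_iff_stem_parity)
  show "T_stem \<tau> D (dbarT v (t 0) \<tau> F)" "T_stem \<tau> D (dT v (t 0) \<tau> F)"
    unfolding T_stem_iff_stem_parity dbarT_def dT_def
    by (intro allI impI stem_parity_add stem_parity_sum stem_parity_scaleR alpha beta; simp)+
qed

section \<open>The slice Cauchy--Riemann operators\<close>

lemma induced_eq_on_slice:
  assumes F: "T_stem \<tau> D F" and f: "\<forall>x\<in>OmegaD v t \<tau> D. f x = induced v t \<tau> D F x"
    and J: "J \<in> torus v t \<tau>"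
  shows "\<forall>q\<in>D. f (tpoint J \<tau> q) = (\<Sum>K\<in>Pow {1..\<tau>}. JK J K * F K q)"
proof
  fix q
  assume q: "q \<in> D"
  then have "tpoint J \<tau> q \<in> OmegaD v t \<tau> D"
    using J unfolding OmegaD_def by blast
  then show "f (tpoint J \<tau> q) = (\<Sum>K\<in>Pow {1..\<tau>}. JK J K * F K q)"
    using f induced_tpoint[OF F q J] by simp
qed

lemma sum_alpha_mult_JK:
  assumes J: "J \<in> torus v t \<tau>"
  shows "(\<Sum>s\<in>{1..t 0}. v s * (\<Sum>K\<in>Pow {1..\<tau>}. JK J K * A s K))
       = (\<Sum>K\<in>Pow {1..\<tau>}. JK J K * ((-1::real) ^ card K *\<^sub>R (\<Sum>s\<in>{1..t 0}. v s * A s K)))"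
proof -
  have "v s * (JK J K * A s K) = JK J K * ((-1::real) ^ card K *\<^sub>R (v s * A s K))"
    if s: "s \<in> {1..t 0}" and K: "K \<in> Pow {1..\<tau>}" for s K
  proof -
    have "v s * JK J K = (-1) ^ card K * (JK J K * v s)"
      using K alpha_anticommute_torus[OF J _ s] finite_subset
      by (intro anticommute_JK) auto
    then have sign: "v s * JK J K = ((-1::real) ^ card K) *\<^sub>R (JK J K * v s)"
      by (simp add: scaleR_conv_of_real)
    have "v s * (JK J K * A s K) = (v s * JK J K) * A s K"
      by (simp only: mult.assoc)
    also have "\<dots> = JK J K * ((-1::real) ^ card K *\<^sub>R (v s * A s K))"
      by (simp add: sign mult.assoc)
    finally show ?thesis .
  qed
  then have "(\<Sum>s\<in>{1..t 0}. v s * (\<Sum>K\<in>Pow {1..\<tau>}. JK J K * A s K))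
      = (\<Sum>s\<in>{1..t 0}. \<Sum>K\<in>Pow {1..\<tau>}. JK J K * ((-1::real) ^ card K *\<^sub>R (v s * A s K)))"
    by (simp add: sum_distrib_left)
  also have "\<dots> = (\<Sum>K\<in>Pow {1..\<tau>}. JK J K * ((-1::real) ^ card K *\<^sub>R (\<Sum>s\<in>{1..t 0}. v s * A s K)))"
    by (subst sum.swap) (simp add: sum_distrib_left scaleR_sum_right)
  finally show ?thesis .
qed

lemma sum_torus_mult_JK:
  assumes J: "J \<in> torus v t \<tau>"
  shows "(\<Sum>u\<in>{1..\<tau>}. J u * (\<Sum>K\<in>Pow {1..\<tau>}. JK J K * B u K))
       = (\<Sum>K\<in>Pow {1..\<tau>}. \<Sum>u\<in>{1..\<tau>}. (-1::real) ^ (sigma_par u K + 1) *\<^sub>R (JK J K * B u (symd K u)))"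
proof -
  have "J u * (JK J K * B u K)
      = (-1::real) ^ (sigma_par u (symd K u) + 1) *\<^sub>R (JK J (symd K u) * B u (symd (symd K u) u))"
    if u: "u \<in> {1..\<tau>}" and K: "K \<in> Pow {1..\<tau>}" for u K
  proof -
    have "J u * JK J K = (-1) ^ (sigma_par u (symd K u) + 1) *\<^sub>R JK J (symd K u)"
      using K finite_subset torus_square[OF J u] torus_anticommute[OF J u]
      by (intro mult_JK_symd) auto
    then show ?thesis
      by (simp flip: mult.assoc)
  qed
  then have "(\<Sum>u\<in>{1..\<tau>}. J u * (\<Sum>K\<in>Pow {1..\<tau>}. JK J K * B u K))
      = (\<Sum>u\<in>{1..\<tau>}. \<Sum>K\<in>Pow {1..\<tau>}.
           (-1::real) ^ (sigma_par u (symd K u) + 1) *\<^sub>R (JK J (symd K u) * B u (symd (symd K u) u)))"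
    by (simp add: sum_distrib_left)
  also have "\<dots> = (\<Sum>u\<in>{1..\<tau>}. \<Sum>K\<in>Pow {1..\<tau>}.
      (-1::real) ^ (sigma_par u K + 1) *\<^sub>R (JK J K * B u (symd K u)))"
    by (intro sum.cong refl sum_Pow_symd[where g = "\<lambda>K. (-1::real) ^ (sigma_par _ K + 1) *\<^sub>R (JK J K * B _ (symd K _))"])
  also have "\<dots> = (\<Sum>K\<in>Pow {1..\<tau>}. \<Sum>u\<in>{1..\<tau>}.
      (-1::real) ^ (sigma_par u K + 1) *\<^sub>R (JK J K * B u (symd K u)))"
    by (rule sum.swap)
  finally show ?thesis .
qed

lemma induced_dbarT_dT_slice:
  assumes F: "T_stem \<tau> D F" and C1: "\<forall>K. K \<subseteq> {1..\<tau>} \<longrightarrow> C1_on v (t 0) \<tau> D (F K)"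
    and f: "\<forall>x\<in>OmegaD v t \<tau> D. f x = induced v t \<tau> D F x"
    and J: "J \<in> torus v t \<tau>" and y: "y \<in> OmegaD v t \<tau> D" "y \<in> RJ v (t 0) \<tau> J"
  shows "induced v t \<tau> D (dbarT v (t 0) \<tau> F) y = dbarJ v (t 0) \<tau> J f y"
    and "induced v t \<tau> D (dT v (t 0) \<tau> F) y = dJ v (t 0) \<tau> J f y"
proof -
  obtain p where p: "p \<in> D" and y_p: "y = tpoint J \<tau> p"
    using OmegaD_RJ_tpoint[OF J y] .
  define A where "A s K = pd_alpha (v s) (F K) p" for s K
  define B where "B u K = pd_beta u (F K) p" for u K
  have C1': "\<forall>K\<in>Pow {1..\<tau>}. C1_on v (t 0) \<tau> D (F K)"
    using C1 by blast
  note sd_f = sd_tpoint[OF J induced_eq_on_slice[OF F f J] p _ C1']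
  have sd_alpha: "sd (v s) f y = (\<Sum>K\<in>Pow {1..\<tau>}. JK J K * A s K)" if "s \<le> t 0" for s
    using sd_f[of s] that by (simp add: y_p A_def wJ_def pd_coord_alpha)
  have sd_beta: "sd (J u) f y = (\<Sum>K\<in>Pow {1..\<tau>}. JK J K * B u K)" if "u \<in> {1..\<tau>}" for u
    using sd_f[of "t 0 + u"] that by (simp add: y_p B_def wJ_def pd_coord_beta)
  have alpha_part: "(\<Sum>s\<in>{1..t 0}. v s * sd (v s) f y)
      = (\<Sum>K\<in>Pow {1..\<tau>}. JK J K * ((-1::real) ^ card K *\<^sub>R (\<Sum>s\<in>{1..t 0}. v s * A s K)))"
    using sum_alpha_mult_JK[OF J, of A] sd_alpha by simp
  have beta_part: "(\<Sum>u\<in>{1..\<tau>}. J u * sd (J u) f y)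
      = (\<Sum>K\<in>Pow {1..\<tau>}. \<Sum>u\<in>{1..\<tau>}. (-1::real) ^ (sigma_par u K + 1) *\<^sub>R (JK J K * B u (symd K u)))"
    using sum_torus_mult_JK[OF J, of B] sd_beta by simp
  have real_part: "sd (v 0) f y = (\<Sum>K\<in>Pow {1..\<tau>}. JK J K * A 0 K)"
    using sd_alpha by simp
  have dbarT_K: "JK J K * dbarT v (t 0) \<tau> F K p = JK J K * A 0 K
      + JK J K * ((-1::real) ^ card K *\<^sub>R (\<Sum>s\<in>{1..t 0}. v s * A s K))
      + (\<Sum>u\<in>{1..\<tau>}. (-1::real) ^ (sigma_par u K + 1) *\<^sub>R (JK J K * B u (symd K u)))" for K
    by (simp add: dbarT_def dbar_alpha_def A_def B_def distrib_left right_diff_distrib sum_distrib_left)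
  have dT_K: "JK J K * dT v (t 0) \<tau> F K p = JK J K * A 0 K
      - JK J K * ((-1::real) ^ card K *\<^sub>R (\<Sum>s\<in>{1..t 0}. v s * A s K))
      - (\<Sum>u\<in>{1..\<tau>}. (-1::real) ^ (sigma_par u K + 1) *\<^sub>R (JK J K * B u (symd K u)))" for K
    by (simp add: dT_def dbar_alpha_def A_def B_def distrib_left right_diff_distrib sum_distrib_left sum_negf)
  have split0: "(\<Sum>s\<in>{0..t 0}. v s * sd (v s) f y) = v 0 * sd (v 0) f y + (\<Sum>s\<in>{1..t 0}. v s * sd (v s) f y)"
    by (simp add: sum.atLeast_Suc_atMost)
  show "induced v t \<tau> D (dbarT v (t 0) \<tau> F) y = dbarJ v (t 0) \<tau> J f y"
    unfolding y_p induced_tpoint[OF T_stem_dbarT_dT(1)[OF F C1] p J]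
    unfolding y_p[symmetric] dbarJ_def split0 alpha_part beta_part real_part dbarT_K
    by (simp add: sum.distrib v0)
  show "induced v t \<tau> D (dT v (t 0) \<tau> F) y = dJ v (t 0) \<tau> J f y"
    unfolding y_p induced_tpoint[OF T_stem_dbarT_dT(2)[OF F C1] p J]
    unfolding y_p[symmetric] dJ_def alpha_part beta_part real_part dT_K
    by (simp add: sum_subtractf)
qed

section \<open>The slice Laplacian\<close>

lemma C2_on_C1_on: "C2_on v (t 0) \<tau> D G \<Longrightarrow> C1_on v (t 0) \<tau> D G"
  by (simp add: C2_on_def)

lemma C2_on_C1_on_pd_coord:
  assumes "C2_on v (t 0) \<tau> D G" "i \<le> t 0 + \<tau>"
  shows "C1_on v (t 0) \<tau> D (pd_coord i G)"
proof (cases "i \<le> t 0")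
  case False
  then have h: "i - t 0 \<in> {1..\<tau>}"
    using assms(2) by auto
  have "pd_coord i G = pd_beta (i - t 0) G"
    using pd_coord_beta[OF h] False by simp
  then show ?thesis
    using assms(1) h by (simp add: C2_on_def)
qed (use assms in \<open>simp add: C2_on_def pd_coord_alpha\<close>)

lemma eventually_alpha_plane_in_D:
  assumes p: "p \<in> D" and ab: "a \<in> span (v ` {0..t 0})" "b \<in> span (v ` {0..t 0})"
  shows "\<forall>\<^sub>F z in nhds (0, 0). (fst p + fst z *\<^sub>R a + snd z *\<^sub>R b, snd p) \<in> D"
proof (rule eventually_openin_path[OF D_openin])
  show "isCont (\<lambda>z. (fst p + fst z *\<^sub>R a + snd z *\<^sub>R b, snd p)) (0, 0)"
    by (intro continuous_intros)
  show "(fst p + fst (0, 0) *\<^sub>R a + snd (0, 0) *\<^sub>R b, snd p) \<in> D"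
    using p by simp
  show "(fst p + fst z *\<^sub>R a + snd z *\<^sub>R b, snd p)
      \<in> span (v ` {0..t 0}) \<times> {\<beta>. \<forall>h. h \<notin> {1..\<tau>} \<longrightarrow> \<beta> h = 0}" for z :: "real \<times> real"
    using D_subset[OF p] ab by (simp add: span_add span_scale)
qed

lemma pd_alpha_commute:
  fixes G :: "'a \<times> (nat \<Rightarrow> real) \<Rightarrow> 'a"
  assumes C2: "C2_on v (t 0) \<tau> D G" and p: "p \<in> D" and i: "i \<le> t 0" and j: "j \<le> t 0"
  shows "pd_alpha (v j) (pd_alpha (v i) G) p = pd_alpha (v i) (pd_alpha (v j) G) p"
proof -
  define plane where "plane z = (fst p + fst z *\<^sub>R v i + snd z *\<^sub>R v j, snd p)" for z :: "real \<times> real"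
  have plane_cont: "continuous_on UNIV plane"
    unfolding plane_def by (intro continuous_intros)
  have "\<forall>\<^sub>F z in nhds (0, 0). plane z \<in> D"
    unfolding plane_def using i j by (intro eventually_alpha_plane_in_D[OF p]) (simp_all add: span_base)
  then have near_D: "\<forall>\<^sub>F (x, y) in nhds (0, 0). plane (x, y) \<in> D"
    unfolding split_def by simp
  have along: "((\<lambda>r. H (plane (r, y))) has_vector_derivative pd_alpha (v i) H (plane (x, y))) (at x)"
    "((\<lambda>r. H (plane (x, r))) has_vector_derivative pd_alpha (v j) H (plane (x, y))) (at y)"
    if "C1_on v (t 0) \<tau> D H" "plane (x, y) \<in> D" for H :: "'a \<times> (nat \<Rightarrow> real) \<Rightarrow> 'a" and x y
  proof -
    have "((\<lambda>r. H (plane (x + r, y))) has_vector_derivative pd_alpha (v i) H (plane (x, y))) (at 0)"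
      "((\<lambda>r. H (plane (x, y + r))) has_vector_derivative pd_alpha (v j) H (plane (x, y))) (at 0)"
      using has_vector_derivative_pd_coord[OF that, of i] has_vector_derivative_pd_coord[OF that, of j] i j
      by (simp_all add: coord_line_def plane_def pd_coord_alpha algebra_simps)
    then show "((\<lambda>r. H (plane (r, y))) has_vector_derivative pd_alpha (v i) H (plane (x, y))) (at x)"
      "((\<lambda>r. H (plane (x, r))) has_vector_derivative pd_alpha (v j) H (plane (x, y))) (at y)"
      using has_vector_derivative_shift_at_0[of "\<lambda>r. H (plane (r, y))" x]
        has_vector_derivative_shift_at_0[of "\<lambda>r. H (plane (x, r))" y]
      by simp_all
  qed
  have C1: "C1_on v (t 0) \<tau> D G" "C1_on v (t 0) \<tau> D (pd_alpha (v i) G)" "C1_on v (t 0) \<tau> D (pd_alpha (v j) G)"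
    using C2 i j by (simp_all add: C2_on_def)
  have "pd_alpha (v j) (pd_alpha (v i) G) (plane (0, 0)) = pd_alpha (v i) (pd_alpha (v j) G) (plane (0, 0))"
  proof (rule mixed_partials_eq[where \<phi> = "\<lambda>x y. G (plane (x, y))"
        and \<phi>x = "\<lambda>x y. pd_alpha (v i) G (plane (x, y))" and \<phi>y = "\<lambda>x y. pd_alpha (v j) G (plane (x, y))"
        and \<phi>xy = "\<lambda>x y. pd_alpha (v j) (pd_alpha (v i) G) (plane (x, y))"
        and \<phi>yx = "\<lambda>x y. pd_alpha (v i) (pd_alpha (v j) G) (plane (x, y))"])
    show "\<forall>\<^sub>F (x, y) in nhds (0, 0).
      ((\<lambda>r. G (plane (r, y))) has_vector_derivative pd_alpha (v i) G (plane (x, y))) (at x) \<and>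
      ((\<lambda>r. pd_alpha (v i) G (plane (x, r))) has_vector_derivative pd_alpha (v j) (pd_alpha (v i) G) (plane (x, y))) (at y) \<and>
      ((\<lambda>r. G (plane (x, r))) has_vector_derivative pd_alpha (v j) G (plane (x, y))) (at y) \<and>
      ((\<lambda>r. pd_alpha (v j) G (plane (r, y))) has_vector_derivative pd_alpha (v i) (pd_alpha (v j) G) (plane (x, y))) (at x)"
      using near_D by (rule eventually_mono) (auto intro: along[OF C1(1)] along[OF C1(2)] along[OF C1(3)])
    have "continuous_on D (pd_alpha (v j) (pd_alpha (v i) G))" "continuous_on D (pd_alpha (v i) (pd_alpha (v j) G))"
      using C1 i j by (simp_all add: C1_on_def)
    then show "isCont (\<lambda>(x, y). pd_alpha (v j) (pd_alpha (v i) G) (plane (x, y))) (0, 0)"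
      "isCont (\<lambda>(x, y). pd_alpha (v i) (pd_alpha (v j) G) (plane (x, y))) (0, 0)"
      using isCont_compose_continuous_on[OF _ plane_cont \<open>\<forall>\<^sub>F z in nhds (0, 0). plane z \<in> D\<close>]
      by (simp_all add: split_def)
  qed
  then show ?thesis
    by (simp add: plane_def)
qed

lemma dbar_alpha_laplacian:
  assumes C2: "C2_on v (t 0) \<tau> D G" and p: "p \<in> D"
  shows "dbar_alpha v (t 0) 0 (dbar_alpha v (t 0) 1 G) p = (\<Sum>s\<in>{0..t 0}. pd_alpha (v s) (pd_alpha (v s) G) p)"
proof -
  define M where "M r s = pd_alpha (v r) (pd_alpha (v s) G) p" for r s
  have M_sym: "M r s = M s r" if "r \<le> t 0" "s \<le> t 0" for r s
    using pd_alpha_commute[OF C2 p that(2,1)] by (simp add: M_def)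
  define H where "H = dbar_alpha v (t 0) 1 G"
  have H_eq: "H = (\<lambda>q. \<Sum>s\<in>{0..t 0}. v s * pd_coord s G q)"
    by (simp add: fun_eq_iff H_def dbar_alpha_def sum.atLeast_Suc_atMost v0 pd_coord_alpha)
  have H_deriv: "pd_alpha (v r) H p = (\<Sum>s\<in>{0..t 0}. v s * M r s)" if r: "r \<le> t 0" for r
  proof -
    have "((\<lambda>x. H (coord_line r p x)) has_vector_derivative (\<Sum>s\<in>{0..t 0}. v s * M r s)) (at 0)"
      unfolding H_eq
    proof (intro has_vector_derivative_sum has_vector_derivative_mult_right_euclidean)
      fix s
      assume "s \<in> {0..t 0}"
      then show "((\<lambda>x. pd_coord s G (coord_line r p x)) has_vector_derivative M r s) (at 0)"
        using has_vector_derivative_pd_coord[OF C2_on_C1_on_pd_coord[OF C2] p, of s r] r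
        by (simp add: M_def pd_coord_alpha)
    qed
    then show ?thesis
      using r by (simp add: pd_coord_def vector_derivative_at flip: pd_coord_alpha)
  qed
  have cl: "clifford_on {1..t 0} v"
    by (rule clifford_on_subset[OF v_clifford]) (use t_le_N[of 0] in auto)
  have "dbar_alpha v (t 0) 0 H p = pd_alpha (v 0) H p - (\<Sum>r\<in>{1..t 0}. v r * pd_alpha (v r) H p)"
    by (simp add: dbar_alpha_def)
  also have "\<dots> = (M 0 0 + (\<Sum>s\<in>{1..t 0}. v s * M 0 s))
      - ((\<Sum>r\<in>{1..t 0}. v r * M r 0) + (\<Sum>r\<in>{1..t 0}. \<Sum>s\<in>{1..t 0}. v r * (v s * M r s)))"
    using H_deriv[of 0, unfolded v0]
    by (simp add: H_deriv sum.atLeast_Suc_atMost v0 distrib_left sum.distrib sum_distrib_left)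
  also have "(\<Sum>s\<in>{1..t 0}. v s * M 0 s) = (\<Sum>r\<in>{1..t 0}. v r * M r 0)"
    by (intro sum.cong refl) (simp add: M_sym)
  also have "(\<Sum>r\<in>{1..t 0}. \<Sum>s\<in>{1..t 0}. v r * (v s * M r s)) = - (\<Sum>r\<in>{1..t 0}. M r r)"
    by (rule clifford_double_sum[OF cl]) (simp_all add: M_sym)
  finally show ?thesis
    by (simp add: H_def M_def sum.atLeast_Suc_atMost)
qed

lemma LapT_eq_sum_pd_coord:
  assumes C2: "C2_on v (t 0) \<tau> D (F K)" and p: "p \<in> D"
  shows "LapT v (t 0) \<tau> F K p = (\<Sum>i\<in>{0..t 0 + \<tau>}. pd_coord i (pd_coord i (F K)) p)"
proof -
  have "LapT v (t 0) \<tau> F K p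
      = (\<Sum>s\<in>{0..t 0}. pd_alpha (v s) (pd_alpha (v s) (F K)) p) + (\<Sum>h\<in>{1..\<tau>}. pd_beta h (pd_beta h (F K)) p)"
    by (simp only: LapT_def dbar_alpha_laplacian[OF assms])
  also have "\<dots> = (\<Sum>i\<in>{0..t 0}. pd_coord i (pd_coord i (F K)) p)
      + (\<Sum>h\<in>{1..\<tau>}. pd_coord (t 0 + h) (pd_coord (t 0 + h) (F K)) p)"
    by (intro arg_cong2[where f = "(+)"] sum.cong refl) (simp_all add: pd_coord_alpha pd_coord_beta)
  also have "\<dots> = (\<Sum>i\<in>{0..t 0 + \<tau>}. pd_coord i (pd_coord i (F K)) p)"
    by (rule sum_atLeast0_atMost_add[symmetric])
  finally show ?thesis .
qed

lemma stem_parity_cong: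
  assumes "stem_parity K g" "\<And>p. p \<in> D \<Longrightarrow> g' p = g p"
  shows "stem_parity K g'"
  using assms D_flip by (simp add: stem_parity_def)

lemma T_stem_LapT:
  assumes F: "T_stem \<tau> D F" and C2: "\<forall>K. K \<subseteq> {1..\<tau>} \<longrightarrow> C2_on v (t 0) \<tau> D (F K)"
  shows "T_stem \<tau> D (LapT v (t 0) \<tau> F)"
  unfolding T_stem_iff_stem_parity
proof (intro allI impI)
  fix K
  assume K: "K \<subseteq> {1..\<tau>}"
  have "stem_parity K (pd_coord i (pd_coord i (F K)))" if i: "i \<le> t 0 + \<tau>" for i
  proof -
    have "stem_parity (coord_flip i K) (pd_coord i (F K))"
      by (intro stem_parity_pd_coord) (use F C2 K i in \<open>auto simp: T_stem_iff_stem_parity C2_on_C1_on\<close>)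
    then have "stem_parity (coord_flip i (coord_flip i K)) (pd_coord i (pd_coord i (F K)))"
      by (rule stem_parity_pd_coord[OF _ C2_on_C1_on_pd_coord]) (use C2 K i in auto)
    then show ?thesis
      by simp
  qed
  then have "stem_parity K (\<lambda>p. \<Sum>i\<in>{0..t 0 + \<tau>}. pd_coord i (pd_coord i (F K)) p)"
    by (intro stem_parity_sum) auto
  then show "stem_parity K (LapT v (t 0) \<tau> F K)"
    by (rule stem_parity_cong) (use C2 K LapT_eq_sum_pd_coord in blast)
qed

lemma induced_LapT_slice:
  assumes F: "T_stem \<tau> D F" and C2: "\<forall>K. K \<subseteq> {1..\<tau>} \<longrightarrow> C2_on v (t 0) \<tau> D (F K)"
    and f: "\<forall>x\<in>OmegaD v t \<tau> D. f x = induced v t \<tau> D F x"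
    and J: "J \<in> torus v t \<tau>" and y: "y \<in> OmegaD v t \<tau> D" "y \<in> RJ v (t 0) \<tau> J"
  shows "induced v t \<tau> D (LapT v (t 0) \<tau> F) y = LapJ v (t 0) \<tau> J f y"
proof -
  obtain p where p: "p \<in> D" and y_p: "y = tpoint J \<tau> p"
    using OmegaD_RJ_tpoint[OF J y] .
  have C1: "\<forall>K\<in>Pow {1..\<tau>}. C1_on v (t 0) \<tau> D (F K)"
    using C2 by (simp add: C2_on_C1_on)
  have C1': "\<forall>K\<in>Pow {1..\<tau>}. C1_on v (t 0) \<tau> D (pd_coord i (F K))" if "i \<le> t 0 + \<tau>" for i
    using C2 that by (simp add: C2_on_C1_on_pd_coord)
  have sd_f: "\<forall>q\<in>D. sd (wJ v (t 0) J i) f (tpoint J \<tau> q) = (\<Sum>K\<in>Pow {1..\<tau>}. JK J K * pd_coord i (F K) q)"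
    if "i \<le> t 0 + \<tau>" for i
    using sd_tpoint[OF J induced_eq_on_slice[OF F f J] _ that C1] by blast
  have sd_sd_f: "sd (wJ v (t 0) J i) (sd (wJ v (t 0) J i) f) y
      = (\<Sum>K\<in>Pow {1..\<tau>}. JK J K * pd_coord i (pd_coord i (F K)) p)" if "i \<le> t 0 + \<tau>" for i
    using sd_tpoint[OF J sd_f[OF that] p that C1'[OF that]] by (simp add: y_p)
  have "LapJ v (t 0) \<tau> J f y = (\<Sum>i\<in>{0..t 0 + \<tau>}. \<Sum>K\<in>Pow {1..\<tau>}. JK J K * pd_coord i (pd_coord i (F K)) p)"
    unfolding LapJ_def by (intro sum.cong refl) (simp add: sd_sd_f)
  also have "\<dots> = (\<Sum>K\<in>Pow {1..\<tau>}. JK J K * (\<Sum>i\<in>{0..t 0 + \<tau>}. pd_coord i (pd_coord i (F K)) p))"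
    by (subst sum.swap) (simp add: sum_distrib_left)
  also have "\<dots> = (\<Sum>K\<in>Pow {1..\<tau>}. JK J K * LapT v (t 0) \<tau> F K p)"
    using C2 LapT_eq_sum_pd_coord[OF _ p] by (intro sum.cong refl) simp
  also have "\<dots> = induced v t \<tau> D (LapT v (t 0) \<tau> F) y"
    using induced_tpoint[OF T_stem_LapT[OF F C2] p J] by (simp add: y_p)
  finally show ?thesis
    by simp
qed

end

theorem theorem3p9:
  fixes cj :: "'a::{real_algebra_1, euclidean_space} \<Rightarrow> 'a"
    and N :: nat and v :: "nat \<Rightarrow> 'a"
    and \<tau> :: nat and t :: "nat \<Rightarrow> nat"
    and D :: "('a \<times> (nat \<Rightarrow> real)) set"
    and F :: "nat set \<Rightarrow> 'a \<times> (nat \<Rightarrow> real) \<Rightarrow> 'a"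
    and f :: "'a \<Rightarrow> 'a" and J :: "nat \<Rightarrow> 'a"
  assumes inv: "star_involution cj"
    and SA_ne: "SA cj \<noteq> {}"
    and N1: "N \<ge> 1"
    and v0: "v 0 = 1"
    and vS: "\<forall>s\<in>{1..N}. v s \<in> SA cj"
    and vanti: "\<forall>s\<in>{1..N}. \<forall>r\<in>{1..N}. s \<noteq> r \<longrightarrow> v s * v r = - (v r * v s)"
    and vorth: "\<forall>s\<le>N. \<forall>r\<le>N. inner (v s) (v r) = (if s = r then 1 else 0)"
    and Vslice: "\<forall>x\<in>span (v ` {0..N}). \<exists>I\<in>SA cj. \<exists>a b::real. x = a *\<^sub>R 1 + b *\<^sub>R I"
    and tmono: "\<forall>h<\<tau>. t h < t (Suc h)"
    and tN: "t \<tau> = N"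
    and Ddom: "T_domain v (t 0) \<tau> D"
    and Fstem: "T_stem \<tau> D F"
    and FC1: "\<forall>K. K \<subseteq> {1..\<tau>} \<longrightarrow> C1_on v (t 0) \<tau> D (F K)"
    and fdef: "\<forall>x\<in>OmegaD v t \<tau> D. f x = induced v t \<tau> D F x"
    and Jtor: "J \<in> torus v t \<tau>"
  shows "(\<forall>y\<in>OmegaD v t \<tau> D \<inter> RJ v (t 0) \<tau> J.
            induced v t \<tau> D (dbarT v (t 0) \<tau> F) y = dbarJ v (t 0) \<tau> J f y) \<and>
         (\<forall>y\<in>OmegaD v t \<tau> D \<inter> RJ v (t 0) \<tau> J.
            induced v t \<tau> D (dT v (t 0) \<tau> F) y = dJ v (t 0) \<tau> J f y) \<and>
         ((\<forall>K. K \<subseteq> {1..\<tau>} \<longrightarrow> C2_on v (t 0) \<tau> D (F K)) \<longrightarrow>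
           (\<forall>y\<in>OmegaD v t \<tau> D \<inter> RJ v (t 0) \<tau> J.
              induced v t \<tau> D (LapT v (t 0) \<tau> F) y = LapJ v (t 0) \<tau> J f y))"
proof -
  interpret slice_setting v N \<tau> t D
  proof
    show "clifford_on {1..N} v"
      unfolding clifford_on_def using vS vanti SA_square by blast
    show "orthonormal_on {0..N} v"
      using vorth by (simp add: orthonormal_on_def)
  qed (fact v0 tmono tN Ddom)+
  show ?thesis
    using induced_dbarT_dT_slice[OF Fstem FC1 fdef Jtor] induced_LapT_slice[OF Fstem _ fdef Jtor]
    by blast
qed

end
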